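(* Let $N\ge 1$, let $U$ be an $N\times N$ unitary matrix, and let $\rho$ be an $N\times N$ density matrix (positive semidefinite, trace one) with eigenvalues $\lambda_1\ge\lambda_2\ge\dots\ge\lambda_N$, where we set $\lambda_j=0$ for $N<j\le 2N$. Define the probability vectors $p,q\in\mathbb{R}^N$ by $p_i=\langle i|\rho|i\rangle$ and $q_i=\langle i|U^\dagger\rho U|i\rangle$, where $\{|i\rangle\}_{i=1}^N$ is the computational basis. Let $W^{(\lambda)}\in\mathbb{R}^{2N}$ be the vector defined below. Then $$p\oplus q\prec W^{(\lambda)}.$$
   Context: For $k=1,\dots,2N-1$ let $s_k=\max\{\|M\| : M \text{ is a submatrix of } U \text{ with } \#\mathrm{rows}(M)+\#\mathrm{cols}(M)=k+1\}$, where $\|M\|$ is the operator norm (largest singular value); a submatrix is obtained by selecting any subset of rows and any subset of columns. For $k=1,\dots,2N$ define $S_k$ as follows: if $k=2n$, then $S_k=\sum_{j=1}^{n}\lambda_j(1+s_{k-j})+\sum_{j=n+1}^{k}\lambda_j(1-s_{j-1})$; if $k=2n+1$ (with $n\ge 0$), then $S_k=\sum_{j=1}^{n}\lambda_j(1+s_{k-j})+\lambda_{n+1}+\sum_{j=n+2}^{k}\lambda_j(1-s_{j-1})$. Set $S_0=0$ and $W^{(\lambda)}_k=S_k-S_{k-1}$ for $k=1,\dots,2N$. The vector $p\oplus q\in\mathbb{R}^{2N}$ is the concatenation of $p$ and $q$. For real vectors $x,y$ (padded with zeros to a common length $L$), $x\prec y$ means $\sum_{i=1}^m x^{\downarrow}_i\le\sum_{i=1}^m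 y^{\downarrow}_i$ for all $m\le L$ and $\sum_i x_i=\sum_i y_i$, where $x^\downarrow$ denotes the nonincreasing rearrangement of $x$. *)

theory Defs
  imports Complex_Main
    "Jordan_Normal_Form.Schur_Decomposition"
    "Jordan_Normal_Form.DL_Submatrix"
    "Jordan_Normal_Form.Char_Poly"
begin

definition unitary_mat :: "nat \<Rightarrow> complex mat \<Rightarrow> bool" where
  "unitary_mat N U \<longleftrightarrow> U \<in> carrier_mat N N \<and>
     mat_adjoint U * U = 1\<^sub>m N \<and> U * mat_adjoint U = 1\<^sub>m N"

definition mat_trace :: "complex mat \<Rightarrow> complex" where
  "mat_trace A = (\<Sum>i<dim_row A. A $$ (i,i))"

(* Density matrix: positive semidefinite (v^* rho v >= 0 for all v; this is the
   complex order, i.e. real and nonnegative), Hermitian, trace one *)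
definition density_mat :: "nat \<Rightarrow> complex mat \<Rightarrow> bool" where
  "density_mat N \<rho> \<longleftrightarrow> \<rho> \<in> carrier_mat N N \<and> mat_adjoint \<rho> = \<rho> \<and>
     (\<forall>v \<in> carrier_vec N. conjugate v \<bullet> (\<rho> *\<^sub>v v) \<ge> 0) \<and> mat_trace \<rho> = 1"

definition vnorm :: "complex vec \<Rightarrow> real" where
  "vnorm v = sqrt (\<Sum>i<dim_vec v. (cmod (v $ i))\<^sup>2)"

definition op_norm :: "complex mat \<Rightarrow> real" where
  "op_norm M = Sup {vnorm (M *\<^sub>v v) | v. v \<in> carrier_vec (dim_col M) \<and> vnorm v \<le> 1}"

definition s_val :: "nat \<Rightarrow> complex mat \<Rightarrow> nat \<Rightarrow> real" where
  "s_val N U k = Max {op_norm (submatrix U I J) | I J.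
      I \<subseteq> {..<N} \<and> J \<subseteq> {..<N} \<and> card I + card J = k + 1}"

(* S_k, with lam 1-indexed (lam j = j-th largest eigenvalue, 0 beyond N) and s 1-indexed *)
definition S_val :: "(nat \<Rightarrow> real) \<Rightarrow> (nat \<Rightarrow> real) \<Rightarrow> nat \<Rightarrow> real" where
  "S_val lam s k = (let n = k div 2 in
     if even k then
       (\<Sum>j=1..n. lam j * (1 + s (k - j))) + (\<Sum>j=n+1..k. lam j * (1 - s (j - 1)))
     else
       (\<Sum>j=1..n. lam j * (1 + s (k - j))) + lam (n + 1)
         + (\<Sum>j=n+2..k. lam j * (1 - s (j - 1))))"

definition W_vec :: "nat \<Rightarrow> (nat \<Rightarrow> real) \<Rightarrow> (nat \<Rightarrow> real) \<Rightarrow> real list" where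
  "W_vec N lam s = map (\<lambda>k. S_val lam s k - S_val lam s (k - 1)) [1..<2*N+1]"

definition majorized :: "real list \<Rightarrow> real list \<Rightarrow> bool" where
  "majorized x y \<longleftrightarrow> (let L = max (length x) (length y);
       xd = rev (sort (x @ replicate (L - length x) 0));
       yd = rev (sort (y @ replicate (L - length y) 0)) in
     (\<forall>m \<le> L. sum_list (take m xd) \<le> sum_list (take m yd)) \<and> sum_list x = sum_list y)"

end

theory Submission
  imports Defs
begin

text \<open>
  Write \<open>\<rho> = \<Sum>\<^sub>j \<lambda>\<^sub>j v\<^sub>j v\<^sub>j\<^sup>*\<close> with orthonormal eigenvectors \<open>v\<^sub>j\<close>, and let the frame vectors
  \<open>f\<^sub>t\<close> (\<open>t < 2N\<close>) be the unit vectors \<open>e\<^sub>i\<close> followed by the columns \<open>U e\<^sub>i\<close>.  The \<open>t\<close>-th entry of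
  \<open>p \<oplus> q\<close> is \<open>\<Sum>\<^sub>j \<lambda>\<^sub>j |\<langle>f\<^sub>t, v\<^sub>j\<rangle>|\<^sup>2\<close>; as the \<open>\<lambda>\<^sub>j\<close> decrease, summation by parts reduces the
  claim to bounding the weight \<open>\<Sum>\<^sub>t\<^sub>\<in>\<^sub>T \<Sum>\<^sub>j\<^sub><\<^sub>K |\<langle>f\<^sub>t, v\<^sub>j\<rangle>|\<^sup>2\<close> of the first \<open>K\<close> eigenvectors on any
  \<open>m\<close> frame vectors by the sum of the first \<open>K\<close> coefficients of \<open>S\<^sub>m\<close>.

  The basic estimate: a unit vector has weight at most \<open>1 + \<parallel>U\<^sub>I\<^sub>J\<parallel>\<close> on the frame vectors
  \<open>e\<^sub>i\<close> (\<open>i \<in> I\<close>) and \<open>U e\<^sub>j\<close> (\<open>j \<in> J\<close>), and at least \<open>1 - \<parallel>U\<^sub>I\<^sub>J\<parallel>\<close> if it lies in their span.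
  For small \<open>K\<close> a dimension count gives a unit vector in the span of the first \<open>K\<close>
  eigenvectors orthogonal to \<open>K - 1\<close> of the \<open>m\<close> frame vectors; rotating it into the first
  column and inducting on \<open>K\<close> gives the bound.  For large \<open>K\<close> the total weight of all \<open>N\<close>
  eigenvectors is \<open>m\<close>, and the weight of the last \<open>N - K\<close> is bounded from below in the same
  way, now using unit vectors in the span of few frame vectors.
\<close>

section \<open>Adjoints and unitary matrices\<close>

lemma dim_mat_adjoint[simp]: "dim_row (mat_adjoint A) = dim_col A" "dim_col (mat_adjoint A) = dim_row A"
  unfolding mat_adjoint_def by (auto simp: mat_of_rows_def)

lemma index_mat_adjoint[simp]:
  "i < dim_col A \<Longrightarrow> j < dim_row A \<Longrightarrow> mat_adjoint A $$ (i,j) = cnj (A $$ (j,i))"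
  unfolding mat_adjoint_def by (simp add: mat_of_rows_def)

lemma mat_adjoint_carrier[simp]:
  "(A::complex mat) \<in> carrier_mat n m \<Longrightarrow> mat_adjoint A \<in> carrier_mat m n"
  unfolding carrier_mat_def by simp

lemma mat_adjoint_adjoint[simp]: "mat_adjoint (mat_adjoint (A::complex mat)) = A"
  by (rule eq_matI) auto

lemma index_mult_mat_sum: "i < dim_row A \<Longrightarrow> j < dim_col B \<Longrightarrow> dim_col A = dim_row B \<Longrightarrow>
   (A * B) $$ (i,j) = (\<Sum>k<dim_col A. A $$ (i,k) * B $$ (k,j))"
  by (simp add: scalar_prod_def atLeast0LessThan)

lemma index_mult_mat_vec_sum: "i < dim_row A \<Longrightarrow> dim_vec v = dim_col A \<Longrightarrow>
   (A *\<^sub>v v) $ i = (\<Sum>k<dim_col A. A $$ (i,k) * v $ k)"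
  by (simp add: scalar_prod_def atLeast0LessThan)

lemma mat_adjoint_mult:
  assumes A: "(A::complex mat) \<in> carrier_mat n m" and B: "B \<in> carrier_mat m p"
  shows "mat_adjoint (A * B) = mat_adjoint B * mat_adjoint A"
proof (rule eq_matI)
  fix i j assume "i < dim_row (mat_adjoint B * mat_adjoint A)" "j < dim_col (mat_adjoint B * mat_adjoint A)"
  then have i: "i < p" and j: "j < n" using A B by auto
  have "mat_adjoint (A * B) $$ (i,j) = cnj ((A * B) $$ (j,i))" using A B i j by simp
  also have "\<dots> = cnj (\<Sum>k<m. A $$ (j,k) * B $$ (k,i))"
    using A B i j by (subst index_mult_mat_sum) auto
  also have "\<dots> = (\<Sum>k<m. cnj (B $$ (k,i)) * cnj (A $$ (j,k)))" by (simp add: mult.commute)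
  also have "\<dots> = (mat_adjoint B * mat_adjoint A) $$ (i,j)" using A B i j
    by (subst index_mult_mat_sum) (auto intro!: sum.cong)
  finally show "mat_adjoint (A * B) $$ (i, j) = (mat_adjoint B * mat_adjoint A) $$ (i, j)" .
qed (use A B in auto)

lemma mat_adjoint_block_diag:
  assumes P: "(P::complex mat) \<in> carrier_mat m m"
  shows "mat_adjoint (four_block_mat (1\<^sub>m 1) (0\<^sub>m 1 m) (0\<^sub>m m 1) P)
       = four_block_mat (1\<^sub>m 1) (0\<^sub>m 1 m) (0\<^sub>m m 1) (mat_adjoint P)"
  using P by (intro eq_matI) auto

lemma cnj_mult_self: "cnj z * z = complex_of_real ((cmod z)^2)"
  using complex_norm_square[of z] by (simp add: mult.commute)

lemma normalize_sq_norm: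
  fixes z :: "nat \<Rightarrow> complex"
  assumes "\<exists>l<m. z l \<noteq> 0"
  shows "0 < (\<Sum>l<m. (cmod (z l))^2)"
    and "(\<Sum>l<m. (cmod (z l / complex_of_real (sqrt (\<Sum>l<m. (cmod (z l))^2))))^2) = 1"
proof -
  define s where "s = (\<Sum>l<m. (cmod (z l))^2)"
  obtain l where l: "l < m" "z l \<noteq> 0" using assms by blast
  have "(cmod (z l))^2 \<le> s" unfolding s_def by (rule member_le_sum) (use l in auto)
  moreover have "0 < (cmod (z l))^2" using l by simp
  ultimately have s0: "0 < s" by linarith
  then show "0 < (\<Sum>l<m. (cmod (z l))^2)" unfolding s_def .
  have "(\<Sum>l<m. (cmod (z l / complex_of_real (sqrt s)))^2) = (\<Sum>l<m. (cmod (z l))^2) / s"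
    using s0 by (simp add: norm_divide power_divide sum_divide_distrib)
  then show "(\<Sum>l<m. (cmod (z l / complex_of_real (sqrt (\<Sum>l<m. (cmod (z l))^2))))^2) = 1"
    using s0 unfolding s_def by simp
qed

text \<open>
  Besides \<open>mat\<close>, arrays are handled as functions \<open>nat \<Rightarrow> nat \<Rightarrow> complex\<close>, so that the
  inductions below can mix and drop columns freely.
\<close>

definition orthonormal_cols :: "nat \<Rightarrow> nat \<Rightarrow> (nat \<Rightarrow> nat \<Rightarrow> complex) \<Rightarrow> bool" where
  "orthonormal_cols n k Y \<longleftrightarrow>
     (\<forall>a<k. \<forall>b<k. (\<Sum>i<n. cnj (Y i a) * Y i b) = (if a = b then 1 else 0))"

definition orthonormal_rows :: "nat \<Rightarrow> nat \<Rightarrow> (nat \<Rightarrow> nat \<Rightarrow> complex) \<Rightarrow> bool" where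
  "orthonormal_rows n k H \<longleftrightarrow>
     (\<forall>a<n. \<forall>b<n. (\<Sum>l<k. H a l * cnj (H b l)) = (if a = b then 1 else 0))"

definition unitary_fun :: "nat \<Rightarrow> (nat \<Rightarrow> nat \<Rightarrow> complex) \<Rightarrow> bool" where
  "unitary_fun n H \<longleftrightarrow> orthonormal_cols n n H \<and> orthonormal_rows n n H"

lemma unitary_fun_of_unitary_mat:
  assumes "unitary_mat N U"
  shows "unitary_fun N (\<lambda>i j. U $$ (i,j))"
proof -
  have U: "U \<in> carrier_mat N N" and UU: "mat_adjoint U * U = 1\<^sub>m N" "U * mat_adjoint U = 1\<^sub>m N"
    using assms unfolding unitary_mat_def by auto
  have "(\<Sum>i<N. cnj (U $$ (i, a)) * U $$ (i, b)) = (if a = b then 1 else 0)"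
    if "a < N" "b < N" for a b
    using arg_cong[OF UU(1), of "\<lambda>M. M $$ (a,b)"] U that
    by (simp add: index_mult_mat_sum del: index_mult_mat)
  moreover have "(\<Sum>l<N. U $$ (a, l) * cnj (U $$ (b, l))) = (if a = b then 1 else 0)"
    if "a < N" "b < N" for a b
    using arg_cong[OF UU(2), of "\<lambda>M. M $$ (a,b)"] U that
    by (simp add: index_mult_mat_sum del: index_mult_mat)
  ultimately show ?thesis unfolding unitary_fun_def orthonormal_cols_def orthonormal_rows_def by blast
qed

lemma unitary_mat_of_unitary_fun:
  assumes "unitary_fun n H"
  shows "unitary_mat n (mat n n (\<lambda>(i,j). H i j))"
proof -
  let ?W = "mat n n (\<lambda>(i,j). H i j)"
  have o: "orthonormal_cols n n H" and r: "orthonormal_rows n n H"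
    using assms unfolding unitary_fun_def by auto
  have "(mat_adjoint ?W * ?W) $$ (i,j) = 1\<^sub>m n $$ (i,j)" if "i < n" "j < n" for i j
    using o that by (subst index_mult_mat_sum) (auto simp: orthonormal_cols_def)
  moreover have "(?W * mat_adjoint ?W) $$ (i,j) = 1\<^sub>m n $$ (i,j)" if "i < n" "j < n" for i j
    using r that by (subst index_mult_mat_sum) (auto simp: orthonormal_rows_def)
  ultimately show ?thesis unfolding unitary_mat_def by (auto intro!: eq_matI)
qed

lemma exists_kernel_vector:
  fixes M :: "nat \<Rightarrow> nat \<Rightarrow> complex"
  assumes "r < c"
  shows "\<exists>z. (\<exists>l<c. z l \<noteq> 0) \<and> (\<forall>i<r. (\<Sum>l<c. M i l * z l) = 0)"
proof -
  define B where "B = mat\<^sub>r c c (\<lambda>i. if i = r then 0\<^sub>v c else vec c (\<lambda>l. M i l))"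
  have Bc: "B \<in> carrier_mat c c" unfolding B_def by auto
  have "det B = 0" unfolding B_def by (rule det_row_0[OF assms]) auto
  then obtain v where v: "v \<in> carrier_vec c" "v \<noteq> 0\<^sub>v c" "B *\<^sub>v v = 0\<^sub>v c"
    using det_0_iff_vec_prod_zero_field[OF Bc] by auto
  have "\<exists>l<c. v $ l \<noteq> 0"
  proof (rule ccontr)
    assume "\<not> ?thesis"
    then have "v = 0\<^sub>v c" using v(1) by (intro eq_vecI) auto
    then show False using v(2) by simp
  qed
  moreover have "(\<Sum>l<c. M i l * v $ l) = 0" if i: "i < r" for i
    using arg_cong[OF v(3), of "\<lambda>w. w $ i"] i assms v(1) Bc
    unfolding B_def by (simp add: index_mult_mat_vec_sum scalar_prod_def atLeast0LessThan)
  ultimately show ?thesis by blast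
qed

lemma exists_kernel_vector_on:
  fixes M :: "nat \<Rightarrow> 'a \<Rightarrow> complex"
  assumes fS: "finite S" and rc: "r < card S"
  shows "\<exists>z. (\<exists>l\<in>S. z l \<noteq> 0) \<and> (\<forall>i<r. (\<Sum>l\<in>S. M i l * z l) = 0)"
proof -
  obtain h where h: "bij_betw h {..<card S} S"
    using ex_bij_betw_nat_finite[OF fS] atLeast0LessThan by metis
  obtain w where w: "\<exists>l<card S. w l \<noteq> 0" "\<forall>i<r. (\<Sum>l<card S. M i (h l) * w l) = 0"
    using exists_kernel_vector[OF rc, of "\<lambda>i l. M i (h l)"] by blast
  define z where "z l = w (the_inv_into {..<card S} h l)" for l
  have zh: "z (h l) = w l" if "l < card S" for l
    unfolding z_def using h that by (simp add: bij_betw_def the_inv_into_f_f)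
  have "\<exists>l\<in>S. z l \<noteq> 0"
    using w(1) zh h by (metis bij_betwE lessThan_iff)
  moreover have "(\<Sum>l\<in>S. M i l * z l) = (\<Sum>l<card S. M i (h l) * w l)" for i
    using zh by (simp add: sum.reindex_bij_betw[symmetric, OF h])
  ultimately show ?thesis using w(2) by auto
qed

text \<open>The hypothesis says \<open>a = 0\<close> or \<open>a = 2 / \<parallel>w\<parallel>\<^sup>2\<close>; then \<open>1 - a w w\<^sup>*\<close> is a Householder reflection.\<close>

lemma orthonormal_cols_householder:
  fixes w :: "nat \<Rightarrow> complex" and a :: real
  assumes h: "a * a * (\<Sum>r<k. (cmod (w r))^2) = 2 * a"
  shows "orthonormal_cols k k (\<lambda>r s. (if r = s then 1 else 0) - complex_of_real a * w r * cnj (w s))"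
  unfolding orthonormal_cols_def
proof (intro allI impI)
  fix p q assume p: "p < k" and q: "q < k"
  define nw where "nw = (\<Sum>r<k. (cmod (w r))^2)"
  have e: "\<And>r. cnj ((if r = p then 1 else 0) - complex_of_real a * w r * cnj (w p)) *
        ((if r = q then 1 else 0) - complex_of_real a * w r * cnj (w q))
     = (if r = p then (if p = q then 1 else 0) else 0)
       - (if r = p then complex_of_real a * w p * cnj (w q) else 0)
       - (if r = q then complex_of_real a * cnj (w q) * w p else 0)
       + complex_of_real (a*a) * w p * cnj (w q) * (cnj (w r) * w r)"
    by (auto simp: algebra_simps)
  have "(\<Sum>r<k. cnj ((if r = p then 1 else 0) - complex_of_real a * w r * cnj (w p)) *
        ((if r = q then 1 else 0) - complex_of_real a * w r * cnj (w q)))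
     = (if p = q then 1 else 0) - complex_of_real a * w p * cnj (w q)
       - complex_of_real a * cnj (w q) * w p
       + complex_of_real (a*a) * w p * cnj (w q) * (\<Sum>r<k. cnj (w r) * w r)"
    unfolding e using p q
    by (simp add: sum.distrib sum_subtractf sum_distrib_left[symmetric])
  also have "(\<Sum>r<k. cnj (w r) * w r) = complex_of_real nw"
    unfolding nw_def by (simp add: cnj_mult_self)
  also have "complex_of_real (a*a) * w p * cnj (w q) * complex_of_real nw
      = complex_of_real (a*a*nw) * w p * cnj (w q)" by (simp add: algebra_simps)
  also have "a*a*nw = 2*a" using h nw_def by simp
  finally show "(\<Sum>r<k. cnj ((if r = p then 1 else 0) - complex_of_real a * w r * cnj (w p)) *
        ((if r = q then 1 else 0) - complex_of_real a * w r * cnj (w q))) = (if p = q then 1 else 0)"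
    by (simp add: algebra_simps)
qed

lemma unitary_fun_householder:
  fixes w :: "nat \<Rightarrow> complex" and a :: real
  assumes h: "a * a * (\<Sum>r<k. (cmod (w r))^2) = 2 * a"
  shows "unitary_fun k (\<lambda>r s. (if r = s then 1 else 0) - complex_of_real a * w r * cnj (w s))"
proof -
  let ?G = "\<lambda>r s. (if r = s then 1 else 0) - complex_of_real a * w r * cnj (w s)"
  have cols: "orthonormal_cols k k ?G" by (rule orthonormal_cols_householder[OF h])
  have "?G p l * cnj (?G q l) = cnj (?G l p) * ?G l q" for p q l
    by (auto simp: algebra_simps)
  then have "orthonormal_rows k k ?G"
    using cols unfolding orthonormal_cols_def orthonormal_rows_def by presburger
  with cols show ?thesis unfolding unitary_fun_def by blast
qed

lemma unitary_fun_mult_unimodular: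
  assumes H: "unitary_fun k H" and \<theta>: "cmod \<theta> = 1"
  shows "unitary_fun k (\<lambda>r s. \<theta> * H r s)"
proof -
  have \<theta>1: "cnj \<theta> * \<theta> = 1" using \<theta> cnj_mult_self[of \<theta>] by simp
  have e1: "cnj (\<theta> * x) * (\<theta> * y) = (cnj \<theta> * \<theta>) * (cnj x * y)" for x y by (simp add: ac_simps)
  have e2: "(\<theta> * x) * cnj (\<theta> * y) = (cnj \<theta> * \<theta>) * (x * cnj y)" for x y by (simp add: ac_simps)
  show ?thesis using H
    unfolding unitary_fun_def orthonormal_cols_def orthonormal_rows_def e1 e2 \<theta>1 by simp
qed

lemma unitary_fun_with_first_col:
  fixes z :: "nat \<Rightarrow> complex"
  assumes k: "0 < k" and zn: "(\<Sum>r<k. (cmod (z r))^2) = 1"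
  shows "\<exists>H. unitary_fun k H \<and> (\<forall>r<k. H r 0 = z r)"
proof -
  define \<rho>0 where "\<rho>0 = cmod (z 0)"
  define \<theta> where "\<theta> = (if z 0 = 0 then 1 else z 0 / complex_of_real \<rho>0)"
  have th1: "cmod \<theta> = 1" unfolding \<theta>_def \<rho>0_def by (auto simp: norm_divide)
  have thc: "cnj \<theta> * \<theta> = 1" using th1 cnj_mult_self[of \<theta>] by simp
  have z0: "z 0 = complex_of_real \<rho>0 * \<theta>" unfolding \<theta>_def \<rho>0_def by auto
  obtain k' where k': "k = Suc k'" using k by (cases k) auto
  have zs: "(cmod (z 0))^2 + (\<Sum>r<k'. (cmod (z (Suc r)))^2) = 1"
    using zn unfolding k' sum.lessThan_Suc_shift by simp
  have "\<rho>0^2 \<le> 1" using zs unfolding \<rho>0_def[symmetric]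
    by (metis le_add_same_cancel1 sum_nonneg zero_le_power2)
  then have r1: "\<rho>0 \<le> 1" unfolding \<rho>0_def by (simp add: power_le_one_iff)
  \<comment> \<open>the reflection exchanging \<open>\<theta> e\<^sub>0\<close> and \<open>z\<close> has reflection vector \<open>w = \<theta> e\<^sub>0 - z\<close>\<close>
  define w where "w r = (if r = 0 then \<theta> else 0) - z r" for r
  define nw where "nw = (\<Sum>r<k. (cmod (w r))^2)"
  have w0: "w 0 = complex_of_real (1 - \<rho>0) * \<theta>" unfolding w_def z0 by (simp add: algebra_simps)
  have "nw = (cmod (w 0))^2 + (\<Sum>r<k'. (cmod (z (Suc r)))^2)"
    unfolding nw_def k' sum.lessThan_Suc_shift by (simp add: w_def)
  also have "\<dots> = (1 - \<rho>0)^2 + (1 - \<rho>0^2)"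
    using zs r1 unfolding w0 norm_mult th1 norm_of_real \<rho>0_def by simp
  finally have nwe: "nw = 2 - 2 * \<rho>0" by (simp add: power2_eq_square algebra_simps)
  define a where "a = (if nw = 0 then 0 else 2 / nw)"
  define G where "G r s = (if r = s then 1 else 0) - complex_of_real a * w r * cnj (w s)" for r s
  have G: "unitary_fun k G"
    unfolding G_def by (rule unitary_fun_householder) (simp add: a_def nw_def[symmetric])
  have "\<theta> * G r 0 = z r" if r: "r < k" for r
  proof (cases "nw = 0")
    case True
    then have "w r = 0" using r unfolding nw_def by (simp add: sum_nonneg_eq_0_iff)
    then show ?thesis using r True unfolding G_def w_def a_def by auto
  next
    case False
    have rn1: "1 - \<rho>0 \<noteq> 0" using False nwe by simp
    have "a = 1 / (1 - \<rho>0)" unfolding a_def using False nwe rn1 by (simp add: field_simps)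
    then have "complex_of_real a * complex_of_real (1 - \<rho>0) = 1"
      unfolding of_real_mult[symmetric] using rn1 by simp
    moreover have "\<theta> * G r 0 = \<theta> * (if r = 0 then 1 else 0)
        - (complex_of_real a * complex_of_real (1 - \<rho>0)) * (cnj \<theta> * \<theta>) * w r"
      unfolding G_def w0 by (simp add: algebra_simps)
    ultimately show ?thesis using thc unfolding w_def by simp
  qed
  then show ?thesis using unitary_fun_mult_unimodular[OF G th1] by blast
qed

lemma unitary_with_first_col:
  assumes v: "v \<in> carrier_vec n" and v0: "v \<noteq> 0\<^sub>v n"
  shows "\<exists>W c. unitary_mat n W \<and> c \<noteq> 0 \<and> col W 0 = c \<cdot>\<^sub>v v"
proof -
  have nz: "\<exists>l<n. v $ l \<noteq> 0"
  proof (rule ccontr)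
    assume "\<not> ?thesis"
    then have "v = 0\<^sub>v n" using v by (intro eq_vecI) auto
    then show False using v0 by simp
  qed
  define s where "s = sqrt (\<Sum>r<n. (cmod (v $ r))^2)"
  have s0: "0 < s" unfolding s_def using normalize_sq_norm(1)[OF nz] by simp
  define c where "c = 1 / complex_of_real s"
  have c0: "c \<noteq> 0" unfolding c_def using s0 by simp
  have n0: "0 < n" using nz by auto
  obtain H where H: "unitary_fun n H" "\<forall>r<n. H r 0 = v $ r / complex_of_real s"
    using unitary_fun_with_first_col[OF n0 normalize_sq_norm(2)[OF nz]] unfolding s_def by blast
  have "col (mat n n (\<lambda>(i,j). H i j)) 0 = c \<cdot>\<^sub>v v" using H(2) n0 v by (intro eq_vecI) (auto simp: c_def)
  then show ?thesis using unitary_mat_of_unitary_fun[OF H(1)] c0 by blast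
qed

section \<open>Unitary triangularization and the spectral theorem\<close>

lemma unitary_deflation:
  assumes A: "(A :: complex mat) \<in> carrier_mat n n" and n: "n \<noteq> 0" and e: "eigenvalue A e"
  shows "\<exists>W A2 A3.
    similar_mat_wit A (four_block_mat (mat 1 1 (\<lambda>_. e)) A2 (0\<^sub>m (n - 1) 1) A3) W (mat_adjoint W) \<and>
    A2 \<in> carrier_mat 1 (n - 1) \<and> A3 \<in> carrier_mat (n - 1) (n - 1)"
proof -
  define v where "v = find_eigenvector A e"
  have "eigenvector A v e" unfolding v_def by (rule find_eigenvector[OF A e])
  then have v: "v \<in> carrier_vec n" and v0: "v \<noteq> 0\<^sub>v n" and eigen: "A *\<^sub>v v = e \<cdot>\<^sub>v v"
    using A unfolding eigenvector_def by auto
  obtain W c where Wu: "unitary_mat n W" and Wc: "col W 0 = c \<cdot>\<^sub>v v"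
    using unitary_with_first_col[OF v v0] by blast
  define W' where "W' = mat_adjoint W"
  have W: "W \<in> carrier_mat n n" using Wu unfolding unitary_mat_def by auto
  have W': "W' \<in> carrier_mat n n" unfolding W'_def using W by auto
  have W'W: "W' * W = 1\<^sub>m n" and WW': "W * W' = 1\<^sub>m n" using Wu unfolding unitary_mat_def W'_def by auto
  define A' where "A' = W' * A * W"
  have A': "A' \<in> carrier_mat n n" using W W' A unfolding A'_def by auto
  have "similar_mat_wit A' A W' W"
    by (rule similar_mat_witI[of _ _ n]) (use W W' A A' W'W WW' in \<open>auto simp: A'_def\<close>)
  then have sim: "similar_mat_wit A A' W W'" by (rule similar_mat_wit_sym)
  have AW0: "col (A * W) 0 = e \<cdot>\<^sub>v col W 0"
  proof -
    have "col (A * W) 0 = A *\<^sub>v col W 0" using A W n by (intro eq_vecI) auto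
    also have "\<dots> = c \<cdot>\<^sub>v (A *\<^sub>v v)" unfolding Wc using mult_mat_vec[OF A v] by simp
    also have "\<dots> = e \<cdot>\<^sub>v col W 0" unfolding eigen Wc by (intro eq_vecI) auto
    finally show ?thesis .
  qed
  have col0: "A' $$ (i, 0) = (if i = 0 then e else 0)" if i: "i < n" for i
  proof -
    have "A' $$ (i, 0) = row W' i \<bullet> col (A * W) 0" unfolding A'_def using A W W' i n by auto
    also have "\<dots> = e * (row W' i \<bullet> col W 0)" unfolding AW0
      using W W' i by (subst scalar_prod_smult_distrib[of _ n]) auto
    also have "row W' i \<bullet> col W 0 = (W' * W) $$ (i, 0)" using W W' i n by auto
    finally show ?thesis unfolding W'W using i n by auto
  qed
  obtain A1 A2 A0 A3 where splitA': "split_block A' 1 1 = (A1, A2, A0, A3)"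
    by (cases "split_block A' 1 1") auto
  from A' n have "dim_row A' = 1 + (n - 1)" "dim_col A' = 1 + (n - 1)" by auto
  from split_block[OF splitA' this] have A2: "A2 \<in> carrier_mat 1 (n - 1)"
    and A3: "A3 \<in> carrier_mat (n - 1) (n - 1)" and A'block: "A' = four_block_mat A1 A2 A0 A3" by auto
  have "A1 = mat 1 1 (\<lambda>_. e)" "A0 = 0\<^sub>m (n - 1) 1"
    using splitA' col0 A' n unfolding split_block_def Let_def by auto
  then show ?thesis using sim A2 A3 A'block unfolding W'_def by blast
qed

lemma char_poly_deflation:
  assumes sim: "similar_mat_wit (A :: complex mat) (four_block_mat (mat 1 1 (\<lambda>_. e)) A2 (0\<^sub>m m 1) A3) W W'"
    and A2: "A2 \<in> carrier_mat 1 m" and A3: "A3 \<in> carrier_mat m m"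
    and cp: "char_poly A = [:- e, 1:] * p"
  shows "char_poly A3 = p"
proof -
  define A1 where "A1 = mat 1 1 (\<lambda>_ :: nat \<times> nat. e)"
  have A1: "A1 \<in> carrier_mat 1 1" unfolding A1_def by auto
  have "similar_mat A (four_block_mat A1 A2 (0\<^sub>m m 1) A3)"
    using sim unfolding similar_mat_def A1_def by blast
  then have "[:- e, 1:] * p = char_poly (four_block_mat A1 A2 (0\<^sub>m m 1) A3)"
    unfolding cp[symmetric] by (rule char_poly_similar)
  also have "\<dots> = char_poly A1 * char_poly A3"
    by (rule char_poly_four_block_zeros_col[OF A1 A2 A3])
  also have "char_poly A1 = [:- e, 1:]" by (simp add: A1_def char_poly_defs det_def sign_def)
  finally show ?thesis by (metis mult_cancel_left pCons_eq_0_iff zero_neq_one)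
qed

lemma unitary_schur_block_step:
  assumes A2: "(A2 :: complex mat) \<in> carrier_mat 1 m" and A3: "A3 \<in> carrier_mat m m"
    and simIH: "similar_mat_wit A3 B P' (mat_adjoint P')"
    and ut: "upper_triangular B" and diag: "diag_mat B = es"
  shows "\<exists>P C. similar_mat_wit (four_block_mat (mat 1 1 (\<lambda>_. e)) A2 (0\<^sub>m m 1) A3) C P (mat_adjoint P)
    \<and> upper_triangular C \<and> diag_mat C = e # es"
proof -
  define A1 where "A1 = mat 1 1 (\<lambda>_ :: nat \<times> nat. e)"
  have A1: "A1 \<in> carrier_mat 1 1" unfolding A1_def by auto
  let ?Q' = "mat_adjoint P'"
  from similar_mat_witD2[OF A3 simIH] have B: "B \<in> carrier_mat m m"
    and P': "P' \<in> carrier_mat m m" and Q': "?Q' \<in> carrier_mat m m" and PQ': "P' * ?Q' = 1\<^sub>m m" by auto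
  define P where "P = four_block_mat (1\<^sub>m 1) (0\<^sub>m 1 m) (0\<^sub>m m 1) P'"
  define C where "C = four_block_mat A1 (A2 * P') (0\<^sub>m m 1) B"
  have A2_eq: "A2 = 1\<^sub>m 1 * (A2 * P') * ?Q'"
    using A2 P' Q' by (simp add: assoc_mult_mat[OF A2 P' Q'] PQ')
  have "similar_mat_wit (four_block_mat A1 A2 (0\<^sub>m m 1) A3) C P (mat_adjoint P)"
    unfolding C_def P_def mat_adjoint_block_diag[OF P']
    by (rule similar_mat_wit_four_block[OF similar_mat_wit_refl[OF A1] simIH A2_eq _ A1 A3])
      (use PQ' A2 P' Q' in auto)
  moreover have "upper_triangular C" unfolding C_def
    by (rule upper_triangular_four_block[OF _ B]) (use ut in \<open>auto simp: A1_def\<close>)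
  moreover have "diag_mat C = e # es"
    using diag_four_block_mat[OF A1 B] diag unfolding C_def by (simp add: A1_def diag_mat_def)
  ultimately show ?thesis unfolding A1_def by blast
qed

theorem unitary_schur_decomposition:
  assumes "A \<in> carrier_mat n n"
    and "char_poly A = (\<Prod>(e :: complex) \<leftarrow> es. [:- e, 1:])"
  shows "\<exists>P B. similar_mat_wit A B P (mat_adjoint P) \<and> upper_triangular B \<and> diag_mat B = es"
  using assms
proof (induct es arbitrary: n A)
  case Nil
  with degree_monic_char_poly[of A n] have n: "n = 0" by auto
  have "similar_mat_wit A A (1\<^sub>m n) (mat_adjoint (1\<^sub>m n))"
    using Nil n unfolding similar_mat_wit_def by (auto simp: Let_def)
  then show ?case using n Nil
    by (intro exI[of _ "1\<^sub>m n"] exI[of _ A]) (auto simp: diag_mat_def upper_triangular_def)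
next
  case (Cons e es n A)
  from Cons have A: "A \<in> carrier_mat n n" by auto
  have cp: "char_poly A = [: -e, 1 :] * (\<Prod>e \<leftarrow> es. [:- e, 1:])" using Cons(3) by auto
  have mon: "monic (\<Prod>e\<leftarrow> es. [:- e, 1:])" by (rule monic_prod_list) auto
  have "degree (char_poly A) = Suc (degree (\<Prod>e\<leftarrow> es. [:- e, 1:]))" unfolding cp
    by (subst degree_mult_eq) (use mon in auto)
  with degree_monic_char_poly[OF A] have n: "n \<noteq> 0" by auto
  have "eigenvalue A e" unfolding eigenvalue_root_char_poly[OF A] cp by simp
  then obtain W A2 A3 where
    simA: "similar_mat_wit A (four_block_mat (mat 1 1 (\<lambda>_. e)) A2 (0\<^sub>m (n - 1) 1) A3) W (mat_adjoint W)"
    and A2: "A2 \<in> carrier_mat 1 (n - 1)" and A3: "A3 \<in> carrier_mat (n - 1) (n - 1)"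
    using unitary_deflation[OF A n] by blast
  obtain P' B where "similar_mat_wit A3 B P' (mat_adjoint P')" "upper_triangular B" "diag_mat B = es"
    using Cons(1)[OF A3 char_poly_deflation[OF simA A2 A3 cp]] by blast
  then obtain P C where
    simC: "similar_mat_wit (four_block_mat (mat 1 1 (\<lambda>_. e)) A2 (0\<^sub>m (n - 1) 1) A3) C P (mat_adjoint P)"
    and C: "upper_triangular C" "diag_mat C = e # es"
    using unitary_schur_block_step[OF A2 A3] by blast
  have Wc: "W \<in> carrier_mat n n" using similar_mat_witD2[OF A simA] by auto
  have "four_block_mat (mat 1 1 (\<lambda>_. e)) A2 (0\<^sub>m (n - 1) 1) A3 \<in> carrier_mat n n" using A2 A3 n by auto
  then have Pc: "P \<in> carrier_mat n n" using similar_mat_witD2[OF _ simC] by auto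
  have "similar_mat_wit A C (W * P) (mat_adjoint (W * P))"
    using similar_mat_wit_trans[OF simA simC] mat_adjoint_mult[OF Wc Pc] by simp
  then show ?case using C by blast
qed

lemma hermitian_upper_triangular_index:
  assumes B: "B \<in> carrier_mat N N" and herm: "mat_adjoint B = B" and ut: "upper_triangular B"
    and dg: "diag_mat B = map complex_of_real ev" and a: "a < N" and m: "m < N"
  shows "B $$ (a,m) = (if a = m then complex_of_real (ev ! m) else 0)"
proof -
  have len: "length ev = N" using arg_cong[OF dg, of length] B by (simp add: diag_mat_def)
  consider "a = m" | "m < a" | "a < m" by linarith
  then show ?thesis
  proof cases
    case 1
    then show ?thesis using arg_cong[OF dg, of "\<lambda>l. l ! m"] m B len by (simp add: diag_mat_def)
  next
    case 2
    then show ?thesis using ut a B unfolding upper_triangular_def by auto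
  next
    case 3
    then have "B $$ (m,a) = 0" using ut m B unfolding upper_triangular_def by auto
    moreover have "B $$ (a,m) = cnj (B $$ (m,a))"
      using arg_cong[OF herm, of "\<lambda>M. M $$ (a,m)"] a m B by simp
    ultimately show ?thesis using 3 by simp
  qed
qed

lemma hermitian_spectral_decomposition:
  assumes rc: "\<rho> \<in> carrier_mat N N" and herm: "mat_adjoint \<rho> = \<rho>"
    and cp: "char_poly \<rho> = (\<Prod>x\<leftarrow>ev. [:- complex_of_real x, 1:])"
  shows "\<exists>V. unitary_mat N V \<and>
    (\<forall>i<N. \<forall>k<N. \<rho> $$ (i,k) = (\<Sum>j<N. V $$ (i,j) * complex_of_real (ev ! j) * cnj (V $$ (k,j))))"
proof -
  have "char_poly \<rho> = (\<Prod>e\<leftarrow>map complex_of_real ev. [:- e, 1:])"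
    unfolding cp by (simp add: o_def)
  then obtain P B where sim: "similar_mat_wit \<rho> B P (mat_adjoint P)" and ut: "upper_triangular B"
    and dg: "diag_mat B = map complex_of_real ev"
    using unitary_schur_decomposition[OF rc] by blast
  note sd = similar_mat_witD2[OF rc sim]
  have B: "B \<in> carrier_mat N N" and P: "P \<in> carrier_mat N N" and Q: "mat_adjoint P \<in> carrier_mat N N"
    using sd by auto
  have Be: "B = mat_adjoint P * (\<rho> * P)"
  proof -
    have PB: "P * B \<in> carrier_mat N N" using P B by simp
    have "mat_adjoint P * \<rho> = (mat_adjoint P * (P * B)) * mat_adjoint P"
      unfolding sd(3) using assoc_mult_mat[OF Q PB Q] by simp
    also have "mat_adjoint P * (P * B) = B"
      using assoc_mult_mat[OF Q P B] sd(2) B by simp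
    finally have "mat_adjoint P * \<rho> * P = B * (mat_adjoint P * P)"
      using assoc_mult_mat[OF B Q P] by simp
    then show ?thesis using sd(2) B assoc_mult_mat[OF Q rc P] by simp
  qed
  have "mat_adjoint B = B"
    unfolding Be using P rc herm
    by (simp add: mat_adjoint_mult[of _ N N _ N] assoc_mult_mat[of _ N N _ N _ N])
  note Bd = hermitian_upper_triangular_index[OF B this ut dg]
  have "\<rho> $$ (i,k) = (\<Sum>j<N. P $$ (i,j) * complex_of_real (ev ! j) * cnj (P $$ (k,j)))"
    if i: "i < N" and k: "k < N" for i k
  proof -
    have "\<rho> $$ (i,k) = (\<Sum>m<N. (P * B) $$ (i,m) * mat_adjoint P $$ (m,k))"
      unfolding sd(3) using i k P B by (subst index_mult_mat_sum) auto
    also have "\<dots> = (\<Sum>m<N. (\<Sum>a<N. P $$ (i,a) * B $$ (a,m)) * cnj (P $$ (k,m)))"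
      using i k P B by (intro sum.cong refl) (subst index_mult_mat_sum, auto)
    also have "\<dots> = (\<Sum>m<N. (\<Sum>a<N. if a = m then P $$ (i,m) * complex_of_real (ev ! m) else 0) *
        cnj (P $$ (k,m)))"
      using Bd by (intro sum.cong refl arg_cong2[where f = "(*)"]) auto
    also have "\<dots> = (\<Sum>m<N. P $$ (i,m) * complex_of_real (ev ! m) * cnj (P $$ (k,m)))" by simp
    finally show ?thesis .
  qed
  moreover have "unitary_mat N P" unfolding unitary_mat_def using P sd by auto
  ultimately show ?thesis by blast
qed

section \<open>Coordinate vectors and the frame\<close>

lemma lagrange_identity:
  fixes f g :: "nat \<Rightarrow> real"
  shows "(\<Sum>i\<in>S. \<Sum>j\<in>S. (f i * g j - f j * g i)^2)
     = 2 * ((\<Sum>i\<in>S. (f i)^2) * (\<Sum>j\<in>S. (g j)^2)) - 2 * (\<Sum>i\<in>S. f i * g i)^2"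
proof -
  have e: "\<And>i j. (f i * g j - f j * g i)^2
      = (f i)^2 * (g j)^2 + (f j)^2 * (g i)^2 - 2 * ((f i * g i) * (f j * g j))"
    by (simp add: power2_eq_square algebra_simps)
  have a: "(\<Sum>i\<in>S. \<Sum>j\<in>S. (f i)^2 * (g j)^2) = (\<Sum>i\<in>S. (f i)^2) * (\<Sum>j\<in>S. (g j)^2)"
    by (simp add: sum_product)
  have b: "(\<Sum>i\<in>S. \<Sum>j\<in>S. (f j)^2 * (g i)^2) = (\<Sum>i\<in>S. (f i)^2) * (\<Sum>j\<in>S. (g j)^2)"
    by (subst sum.swap) (simp add: sum_product)
  have c: "(\<Sum>i\<in>S. \<Sum>j\<in>S. (f i * g i) * (f j * g j)) = (\<Sum>i\<in>S. f i * g i)^2"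
    by (simp add: sum_product power2_eq_square)
  have d: "(\<Sum>i\<in>S. \<Sum>j\<in>S. (f i)^2 * (g j)^2 + (f j)^2 * (g i)^2 - 2 * ((f i * g i) * (f j * g j)))
     = (\<Sum>i\<in>S. \<Sum>j\<in>S. (f i)^2 * (g j)^2) + (\<Sum>i\<in>S. \<Sum>j\<in>S. (f j)^2 * (g i)^2)
       - 2 * (\<Sum>i\<in>S. \<Sum>j\<in>S. (f i * g i) * (f j * g j))"
    by (simp add: sum_subtractf sum.distrib sum_distrib_left)
  show ?thesis unfolding e d a b c by simp
qed

lemma cauchy_schwarz_sq:
  fixes f g :: "nat \<Rightarrow> real"
  shows "(\<Sum>i\<in>S. f i * g i)^2 \<le> (\<Sum>i\<in>S. (f i)^2) * (\<Sum>i\<in>S. (g i)^2)"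
proof -
  have "0 \<le> (\<Sum>i\<in>S. \<Sum>j\<in>S. (f i * g j - f j * g i)^2)" by (intro sum_nonneg) auto
  then show ?thesis unfolding lagrange_identity by simp
qed

lemma cauchy_schwarz_real:
  fixes f g :: "nat \<Rightarrow> real"
  shows "(\<Sum>i\<in>S. f i * g i) \<le> sqrt (\<Sum>i\<in>S. (f i)^2) * sqrt (\<Sum>i\<in>S. (g i)^2)"
proof -
  have "(\<Sum>i\<in>S. f i * g i) \<le> sqrt ((\<Sum>i\<in>S. f i * g i)^2)" by simp
  also have "\<dots> \<le> sqrt ((\<Sum>i\<in>S. (f i)^2) * (\<Sum>i\<in>S. (g i)^2))"
    by (rule real_sqrt_le_mono[OF cauchy_schwarz_sq])
  also have "\<dots> = sqrt (\<Sum>i\<in>S. (f i)^2) * sqrt (\<Sum>i\<in>S. (g i)^2)" by (simp add: real_sqrt_mult)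
  finally show ?thesis .
qed

lemma cauchy_schwarz_cmod:
  fixes a b :: "nat \<Rightarrow> complex"
  shows "cmod (\<Sum>i\<in>S. cnj (a i) * b i) \<le> sqrt (\<Sum>i\<in>S. (cmod (a i))^2) * sqrt (\<Sum>i\<in>S. (cmod (b i))^2)"
proof -
  have "cmod (\<Sum>i\<in>S. cnj (a i) * b i) \<le> (\<Sum>i\<in>S. cmod (cnj (a i) * b i))" by (rule norm_sum)
  also have "\<dots> = (\<Sum>i\<in>S. cmod (a i) * cmod (b i))" by (simp add: norm_mult)
  also have "\<dots> \<le> sqrt (\<Sum>i\<in>S. (cmod (a i))^2) * sqrt (\<Sum>i\<in>S. (cmod (b i))^2)" by (rule cauchy_schwarz_real)
  finally show ?thesis .
qed

lemma cmod_add_sq: "(cmod (a + b))^2 = (cmod a)^2 + (cmod b)^2 + 2 * Re (cnj a * b)"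
  unfolding cmod_power2 by (simp add: power2_eq_square algebra_simps)

lemma two_sqrt_mult_le_add: "0 \<le> A \<Longrightarrow> 0 \<le> B \<Longrightarrow> 2 * (sqrt A * sqrt B) \<le> A + B"
  using sum_squares_bound[of "sqrt A" "sqrt B"] by (simp add: power2_eq_square[symmetric])

lemma sqrt_mult_add_le:
  assumes "0 \<le> A" "0 \<le> B" "0 \<le> X" "0 \<le> Y"
  shows "sqrt A * sqrt X + sqrt B * sqrt Y \<le> sqrt (A + B) * sqrt (X + Y)"
proof -
  let ?a = "sqrt A" and ?b = "sqrt B" and ?p = "sqrt X" and ?q = "sqrt Y"
  have "(?a * ?p + ?b * ?q)^2 \<le> (A + B) * (X + Y)"
    using L2_set_mult_ineq_lemma[of ?a ?p ?b ?q] assms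
    by (simp add: power2_sum power_mult_distrib algebra_simps)
  then have "(?a * ?p + ?b * ?q)^2 \<le> (sqrt (A + B) * sqrt (X + Y))^2"
    using assms by (simp add: power_mult_distrib)
  then show ?thesis by (rule power2_le_imp_le) (use assms in simp)
qed

lemma sum_lessThan_if_mem:
  "I \<subseteq> {..<(N::nat)} \<Longrightarrow> (\<Sum>i<N. if i \<in> I then g i else 0) = (\<Sum>i\<in>I. g i)"
  by (subst sum.inter_restrict[symmetric]) (auto intro: sum.cong simp: Int_absorb1)

lemma sum_lessThan_support:
  "I \<subseteq> {..<(N::nat)} \<Longrightarrow> (\<forall>i. i \<notin> I \<longrightarrow> g i = 0) \<Longrightarrow> (\<Sum>i<N. g i) = (\<Sum>i\<in>I. g i)"
  by (rule sum.mono_neutral_right) auto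

lemma sum_cmod_sq_orthonormal_rows:
  fixes a :: "nat \<Rightarrow> complex"
  assumes H: "\<forall>r<k. \<forall>s<k. (\<Sum>l<m. H r l * cnj (H s l)) = (if r = s then 1 else 0)"
  shows "(\<Sum>l<m. (cmod (\<Sum>r<k. a r * H r l))^2) = (\<Sum>r<k. (cmod (a r))^2)"
proof -
  have "complex_of_real (\<Sum>l<m. (cmod (\<Sum>r<k. a r * H r l))^2)
      = (\<Sum>l<m. (\<Sum>r<k. a r * H r l) * cnj (\<Sum>s<k. a s * H s l))"
    by (simp only: of_real_sum complex_norm_square)
  also have "\<dots> = (\<Sum>l<m. \<Sum>r<k. \<Sum>s<k. (a r * cnj (a s)) * (H r l * cnj (H s l)))"
    by (simp add: sum_product algebra_simps)
  also have "\<dots> = (\<Sum>r<k. \<Sum>s<k. (a r * cnj (a s)) * (\<Sum>l<m. H r l * cnj (H s l)))"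
    by (subst sum.swap) (simp add: sum_distrib_left sum.swap[of _ "{..<m}"])
  also have "\<dots> = (\<Sum>r<k. \<Sum>s<k. (a r * cnj (a s)) * (if r = s then 1 else 0))"
    using H by (intro sum.cong refl) auto
  also have "\<dots> = (\<Sum>r<k. a r * cnj (a r))" by (simp add: if_distrib cong: if_cong)
  also have "\<dots> = complex_of_real (\<Sum>r<k. (cmod (a r))^2)" by (simp only: of_real_sum complex_norm_square)
  finally show ?thesis by (simp only: of_real_eq_iff)
qed

definition sq_norm :: "nat \<Rightarrow> (nat \<Rightarrow> complex) \<Rightarrow> real" where
  "sq_norm N x = (\<Sum>i<N. (cmod (x i))^2)"

definition cinner :: "nat \<Rightarrow> (nat \<Rightarrow> complex) \<Rightarrow> (nat \<Rightarrow> complex) \<Rightarrow> complex" where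
  "cinner N x y = (\<Sum>i<N. cnj (x i) * y i)"

definition mat_apply :: "nat \<Rightarrow> complex mat \<Rightarrow> (nat \<Rightarrow> complex) \<Rightarrow> nat \<Rightarrow> complex" where
  "mat_apply N U y i = (\<Sum>j<N. U $$ (i,j) * y j)"

definition adj_apply :: "nat \<Rightarrow> complex mat \<Rightarrow> (nat \<Rightarrow> complex) \<Rightarrow> nat \<Rightarrow> complex" where
  "adj_apply N U \<phi> j = (\<Sum>i<N. cnj (U $$ (i,j)) * \<phi> i)"

lemma sq_norm_nonneg[simp]: "0 \<le> sq_norm N x"
  unfolding sq_norm_def by (intro sum_nonneg) auto

lemma cinner_self: "cinner N \<phi> \<phi> = complex_of_real (sq_norm N \<phi>)"
  unfolding cinner_def sq_norm_def by (simp add: cnj_mult_self)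

lemma orthonormal_cols_sq_norm: "orthonormal_cols N k Y \<Longrightarrow> j < k \<Longrightarrow> sq_norm N (\<lambda>i. Y i j) = 1"
  unfolding orthonormal_cols_def using cinner_self[of N "\<lambda>i. Y i j"] by (auto simp: cinner_def)

lemma sq_norm_col_unitary: "unitary_fun N Y \<Longrightarrow> j < N \<Longrightarrow> sq_norm N (\<lambda>i. Y i j) = 1"
  unfolding unitary_fun_def by (auto intro: orthonormal_cols_sq_norm)

lemma sq_norm_eq_0D: "sq_norm N x = 0 \<Longrightarrow> i < N \<Longrightarrow> x i = 0"
  unfolding sq_norm_def by (simp add: sum_nonneg_eq_0_iff)

lemma sq_norm_add: "sq_norm N (\<lambda>i. x i + w i) = sq_norm N x + sq_norm N w + 2 * Re (cinner N x w)"
  unfolding sq_norm_def cinner_def cmod_add_sq by (simp add: sum.distrib sum_distrib_left)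

lemma cinner_mat_apply: "cinner N \<phi> (mat_apply N U y) = (\<Sum>j<N. cnj (adj_apply N U \<phi> j) * y j)"
proof -
  have "cinner N \<phi> (mat_apply N U y) = (\<Sum>i<N. \<Sum>j<N. cnj (\<phi> i) * U$$(i,j) * y j)"
    unfolding cinner_def mat_apply_def by (simp add: sum_distrib_left mult.assoc)
  also have "\<dots> = (\<Sum>j<N. \<Sum>i<N. cnj (\<phi> i) * U$$(i,j) * y j)" by (rule sum.swap)
  also have "\<dots> = (\<Sum>j<N. (\<Sum>i<N. cnj (\<phi> i) * U$$(i,j)) * y j)"
    by (simp add: sum_distrib_right)
  also have "\<dots> = (\<Sum>j<N. cnj (adj_apply N U \<phi> j) * y j)" unfolding adj_apply_def by (simp add: mult.commute)
  finally show ?thesis .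
qed

lemma mat_apply_divide: "mat_apply N U (\<lambda>j. y j / c) i = mat_apply N U y i / c"
  unfolding mat_apply_def by (simp add: sum_divide_distrib)

lemma sq_norm_mat_apply:
  assumes U: "unitary_fun N (\<lambda>i j. U$$(i,j))"
  shows "sq_norm N (mat_apply N U y) = sq_norm N y"
proof -
  have H: "\<forall>r<N. \<forall>s<N. (\<Sum>l<N. U$$(l,r) * cnj (U$$(l,s))) = (if r = s then 1 else 0)"
  proof (intro allI impI)
    fix r s assume "r < N" "s < N"
    then have "(\<Sum>i<N. cnj (U$$(i,r)) * U$$(i,s)) = (if r = s then 1 else 0)"
      using U unfolding unitary_fun_def orthonormal_cols_def by blast
    then have "cnj (\<Sum>i<N. cnj (U$$(i,r)) * U$$(i,s)) = (if r = s then 1 else 0)" by simp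
    then show "(\<Sum>l<N. U$$(l,r) * cnj (U$$(l,s))) = (if r = s then 1 else 0)" by simp
  qed
  have "sq_norm N (mat_apply N U y) = (\<Sum>l<N. (cmod (\<Sum>r<N. y r * U$$(l,r)))^2)"
    unfolding sq_norm_def mat_apply_def by (simp add: mult.commute)
  also have "\<dots> = sq_norm N y" unfolding sq_norm_def by (rule sum_cmod_sq_orthonormal_rows[OF H])
  finally show ?thesis .
qed

lemma sq_norm_adj_apply:
  assumes U: "unitary_fun N (\<lambda>i j. U$$(i,j))"
  shows "sq_norm N (adj_apply N U \<phi>) = sq_norm N \<phi>"
proof -
  have H: "\<forall>r<N. \<forall>s<N. (\<Sum>l<N. cnj (U$$(r,l)) * cnj (cnj (U$$(s,l)))) = (if r = s then 1 else 0)"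
  proof (intro allI impI)
    fix r s assume "r < N" "s < N"
    then have "(\<Sum>l<N. U$$(r,l) * cnj (U$$(s,l))) = (if r = s then 1 else 0)"
      using U unfolding unitary_fun_def orthonormal_rows_def by blast
    then have "cnj (\<Sum>l<N. U$$(r,l) * cnj (U$$(s,l))) = (if r = s then 1 else 0)" by simp
    then show "(\<Sum>l<N. cnj (U$$(r,l)) * cnj (cnj (U$$(s,l)))) = (if r = s then 1 else 0)" by simp
  qed
  have "sq_norm N (adj_apply N U \<phi>) = (\<Sum>l<N. (cmod (\<Sum>r<N. \<phi> r * cnj (U$$(r,l))))^2)"
    unfolding sq_norm_def adj_apply_def by (simp add: mult.commute)
  also have "\<dots> = sq_norm N \<phi>" unfolding sq_norm_def by (rule sum_cmod_sq_orthonormal_rows[OF H])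
  finally show ?thesis .
qed

text \<open>\<open>c\<close> bounds the operator norm of the submatrix \<open>U\<^sub>I\<^sub>J\<close>, in bilinear form.\<close>

definition inner_bound :: "nat \<Rightarrow> complex mat \<Rightarrow> nat set \<Rightarrow> nat set \<Rightarrow> real \<Rightarrow> bool" where
  "inner_bound N U I J c \<longleftrightarrow> (\<forall>x y. (\<forall>i. i \<notin> I \<longrightarrow> x i = 0) \<longrightarrow> (\<forall>j. j \<notin> J \<longrightarrow> y j = 0) \<longrightarrow>
      cmod (cinner N x (mat_apply N U y)) \<le> c * sqrt (sq_norm N x) * sqrt (sq_norm N y))"

lemma sq_norm_add_mat_apply_bounds:
  assumes U: "unitary_fun N (\<lambda>i j. U $$ (i,j))" and ob: "inner_bound N U I J c" and c0: "0 \<le> c"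
    and xs: "\<forall>i. i \<notin> I \<longrightarrow> x i = 0" and ys: "\<forall>j. j \<notin> J \<longrightarrow> y j = 0"
  shows "sq_norm N (\<lambda>i. x i + mat_apply N U y i) \<le> (1 + c) * (sq_norm N x + sq_norm N y)"
    and "(1 - c) * (sq_norm N x + sq_norm N y) \<le> sq_norm N (\<lambda>i. x i + mat_apply N U y i)"
proof -
  have e: "sq_norm N (\<lambda>i. x i + mat_apply N U y i)
      = sq_norm N x + sq_norm N y + 2 * Re (cinner N x (mat_apply N U y))"
    unfolding sq_norm_add sq_norm_mat_apply[OF U] ..
  have "\<bar>Re (cinner N x (mat_apply N U y))\<bar> \<le> cmod (cinner N x (mat_apply N U y))" by (rule abs_Re_le_cmod)
  also have "\<dots> \<le> c * (sqrt (sq_norm N x) * sqrt (sq_norm N y))"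
    using ob xs ys unfolding inner_bound_def by (simp add: mult.assoc)
  also have "\<dots> \<le> c * ((sq_norm N x + sq_norm N y) / 2)"
    using two_sqrt_mult_le_add[of "sq_norm N x" "sq_norm N y"] c0 by (intro mult_left_mono) auto
  finally have "\<bar>Re (cinner N x (mat_apply N U y))\<bar> \<le> c * ((sq_norm N x + sq_norm N y) / 2)" .
  then show "sq_norm N (\<lambda>i. x i + mat_apply N U y i) \<le> (1 + c) * (sq_norm N x + sq_norm N y)"
    and "(1 - c) * (sq_norm N x + sq_norm N y) \<le> sq_norm N (\<lambda>i. x i + mat_apply N U y i)"
    unfolding e by (auto simp: algebra_simps abs_le_iff)
qed

lemma partial_weight_le_1_plus:
  assumes U: "unitary_fun N (\<lambda>i j. U $$ (i,j))" and I: "I \<subseteq> {..<N}" and J: "J \<subseteq> {..<N}"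
    and ob: "inner_bound N U I J c" and c0: "0 \<le> c" and n\<phi>: "sq_norm N \<phi> = 1"
  shows "(\<Sum>i\<in>I. (cmod (\<phi> i))^2) + (\<Sum>j\<in>J. (cmod (adj_apply N U \<phi> j))^2) \<le> 1 + c"
proof -
  define x where "x i = (if i \<in> I then \<phi> i else 0)" for i
  define y where "y j = (if j \<in> J then adj_apply N U \<phi> j else 0)" for j
  define A where "A = (\<Sum>i\<in>I. (cmod (\<phi> i))^2)"
  define B where "B = (\<Sum>j\<in>J. (cmod (adj_apply N U \<phi> j))^2)"
  have AB0: "0 \<le> A + B" unfolding A_def B_def by (intro add_nonneg_nonneg sum_nonneg) auto
  have "sq_norm N x = A" unfolding sq_norm_def x_def A_def
    by (subst sum_lessThan_if_mem[OF I, symmetric]) (intro sum.cong refl, auto)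
  moreover have "sq_norm N y = B" unfolding sq_norm_def y_def B_def
    by (subst sum_lessThan_if_mem[OF J, symmetric]) (intro sum.cong refl, auto)
  ultimately have le: "sq_norm N (\<lambda>i. x i + mat_apply N U y i) \<le> (1 + c) * (A + B)"
    using sq_norm_add_mat_apply_bounds(1)[OF U ob c0, of x y] by (simp add: x_def y_def)
  have "cinner N \<phi> x = complex_of_real A"
    unfolding cinner_def x_def A_def sum_lessThan_if_mem[OF I, symmetric]
    by (simp add: of_real_sum cnj_mult_self if_distrib cong: if_cong)
  moreover have "cinner N \<phi> (mat_apply N U y) = complex_of_real B"
    unfolding cinner_mat_apply y_def B_def sum_lessThan_if_mem[OF J, symmetric]
    by (simp add: of_real_sum cnj_mult_self if_distrib cong: if_cong)
  ultimately have ip: "cinner N \<phi> (\<lambda>i. x i + mat_apply N U y i) = complex_of_real (A + B)"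
    unfolding cinner_def by (simp add: distrib_left sum.distrib)
  have "A + B = cmod (cinner N \<phi> (\<lambda>i. x i + mat_apply N U y i))"
    unfolding ip norm_of_real using AB0 by simp
  also have "\<dots> \<le> sqrt (sq_norm N \<phi>) * sqrt (sq_norm N (\<lambda>i. x i + mat_apply N U y i))"
    unfolding cinner_def sq_norm_def by (rule cauchy_schwarz_cmod)
  finally have "(A + B)^2 \<le> sq_norm N (\<lambda>i. x i + mat_apply N U y i)"
    using AB0 n\<phi> real_sqrt_le_iff[of "(A + B)^2"] by simp
  with le have "(A + B) * (A + B) \<le> (1 + c) * (A + B)" by (simp add: power2_eq_square)
  then have "A + B \<le> 1 + c" using AB0 c0 by (cases "A + B = 0") (auto simp: mult_le_cancel_right)
  then show ?thesis unfolding A_def B_def .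
qed

lemma partial_weight_ge_1_minus:
  assumes U: "unitary_fun N (\<lambda>i j. U $$ (i,j))" and I: "I \<subseteq> {..<N}" and J: "J \<subseteq> {..<N}"
    and ob: "inner_bound N U I J c" and c0: "0 \<le> c"
    and xs: "\<forall>i. i \<notin> I \<longrightarrow> x i = 0" and ys: "\<forall>j. j \<notin> J \<longrightarrow> y j = 0"
    and \<phi>: "\<forall>i<N. \<phi> i = x i + mat_apply N U y i" and n\<phi>: "sq_norm N \<phi> = 1"
  shows "1 - c \<le> (\<Sum>i\<in>I. (cmod (\<phi> i))^2) + (\<Sum>j\<in>J. (cmod (adj_apply N U \<phi> j))^2)"
proof -
  define A where "A = (\<Sum>i\<in>I. (cmod (\<phi> i))^2)"
  define B where "B = (\<Sum>j\<in>J. (cmod (adj_apply N U \<phi> j))^2)"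
  define X where "X = sq_norm N x"
  define Y where "Y = sq_norm N y"
  have A0: "0 \<le> A" unfolding A_def by (intro sum_nonneg) auto
  have B0: "0 \<le> B" unfolding B_def by (intro sum_nonneg) auto
  have "sq_norm N (\<lambda>i. x i + mat_apply N U y i) = 1" using \<phi> n\<phi> unfolding sq_norm_def by simp
  then have XY: "(1 - c) * (X + Y) \<le> 1"
    using sq_norm_add_mat_apply_bounds(2)[OF U ob c0 xs ys] unfolding X_def Y_def by simp
  have "cinner N \<phi> x = (\<Sum>i\<in>I. cnj (\<phi> i) * x i)" "X = (\<Sum>i\<in>I. (cmod (x i))^2)"
    unfolding cinner_def X_def sq_norm_def using xs by (auto intro!: sum_lessThan_support[OF I])
  then have ipx: "cmod (cinner N \<phi> x) \<le> sqrt A * sqrt X"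
    unfolding A_def using cauchy_schwarz_cmod[of \<phi> x I] by simp
  have "cinner N \<phi> (mat_apply N U y) = (\<Sum>j\<in>J. cnj (adj_apply N U \<phi> j) * y j)" "Y = (\<Sum>j\<in>J. (cmod (y j))^2)"
    unfolding cinner_mat_apply Y_def sq_norm_def using ys by (auto intro!: sum_lessThan_support[OF J])
  then have ipy: "cmod (cinner N \<phi> (mat_apply N U y)) \<le> sqrt B * sqrt Y"
    unfolding B_def using cauchy_schwarz_cmod[of "adj_apply N U \<phi>" y J] by simp
  have "cinner N \<phi> \<phi> = cinner N \<phi> x + cinner N \<phi> (mat_apply N U y)"
    unfolding cinner_def using \<phi> by (simp add: distrib_left sum.distrib)
  then have "1 = cmod (cinner N \<phi> x + cinner N \<phi> (mat_apply N U y))" unfolding cinner_self n\<phi> by simp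
  also have "\<dots> \<le> sqrt A * sqrt X + sqrt B * sqrt Y"
    using norm_triangle_ineq[of "cinner N \<phi> x" "cinner N \<phi> (mat_apply N U y)"] ipx ipy by linarith
  also have "\<dots> \<le> sqrt ((A + B) * (X + Y))"
    using sqrt_mult_add_le[OF A0 B0] unfolding X_def Y_def by (simp add: real_sqrt_mult)
  finally have h: "1 \<le> (A + B) * (X + Y)" by simp
  show ?thesis
  proof (cases "c < 1")
    case True
    have "1 - c \<le> (1 - c) * ((A + B) * (X + Y))" using h True by (simp add: mult_le_cancel_left1)
    also have "\<dots> = (A + B) * ((1 - c) * (X + Y))" by (simp add: algebra_simps)
    also have "\<dots> \<le> A + B" using mult_left_mono[OF XY, of "A + B"] A0 B0 by simp
    finally show ?thesis unfolding A_def B_def .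
  next
    case False
    then show ?thesis using A0 B0 unfolding A_def B_def by simp
  qed
qed

text \<open>
  The frame vectors are \<open>f\<^sub>t = e\<^sub>t\<close> for \<open>t < N\<close> and \<open>f\<^sub>t = U e\<^sub>t\<^sub>-\<^sub>N\<close> for \<open>N \<le> t < 2 N\<close>;
  \<open>frame_coeff N U \<phi> t\<close> is \<open>\<langle>f\<^sub>t, \<phi>\<rangle>\<close>, and \<open>frame_weight N U T Y k\<close> is the weight of the
  first \<open>k\<close> columns of \<open>Y\<close> on the frame vectors indexed by \<open>T\<close>.
\<close>

definition frame_coeff :: "nat \<Rightarrow> complex mat \<Rightarrow> (nat \<Rightarrow> complex) \<Rightarrow> nat \<Rightarrow> complex" where
  "frame_coeff N U \<phi> t = (if t < N then \<phi> t else adj_apply N U \<phi> (t - N))"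

definition frame_weight :: "nat \<Rightarrow> complex mat \<Rightarrow> nat set \<Rightarrow> (nat \<Rightarrow> nat \<Rightarrow> complex) \<Rightarrow> nat \<Rightarrow> real" where
  "frame_weight N U T Y k = (\<Sum>t\<in>T. \<Sum>l<k. (cmod (frame_coeff N U (\<lambda>i. Y i l) t))^2)"

definition mix_cols ::
    "nat \<Rightarrow> (nat \<Rightarrow> nat \<Rightarrow> complex) \<Rightarrow> (nat \<Rightarrow> nat \<Rightarrow> complex) \<Rightarrow> nat \<Rightarrow> nat \<Rightarrow> complex" where
  "mix_cols k Y H = (\<lambda>i l. \<Sum>r<k. Y i r * H r l)"

definition drop_col :: "(nat \<Rightarrow> nat \<Rightarrow> complex) \<Rightarrow> nat \<Rightarrow> nat \<Rightarrow> complex" where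
  "drop_col Y = (\<lambda>i l. Y i (Suc l))"

lemma orthonormal_cols_mono: "orthonormal_cols N n Y \<Longrightarrow> k \<le> n \<Longrightarrow> orthonormal_cols N k Y"
  unfolding orthonormal_cols_def by auto

lemma orthonormal_cols_shift:
  "orthonormal_cols N (k + d) Y \<Longrightarrow> orthonormal_cols N d (\<lambda>i l. Y i (k + l))"
  unfolding orthonormal_cols_def by auto

lemma orthonormal_cols_drop_col:
  "orthonormal_cols N (Suc k) Y \<Longrightarrow> orthonormal_cols N k (drop_col Y)"
  unfolding orthonormal_cols_def drop_col_def by auto

lemma orthonormal_cols_mix_cols:
  assumes Y: "orthonormal_cols N k Y" and H: "orthonormal_cols k k H"
  shows "orthonormal_cols N k (mix_cols k Y H)"
  unfolding orthonormal_cols_def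
proof (intro allI impI)
  fix a b assume a: "a < k" and b: "b < k"
  have "(\<Sum>i<N. cnj (mix_cols k Y H i a) * mix_cols k Y H i b)
     = (\<Sum>i<N. \<Sum>s<k. \<Sum>r<k. (cnj (H r a) * H s b) * (cnj (Y i r) * Y i s))"
    unfolding mix_cols_def by (simp add: sum_product algebra_simps)
  also have "\<dots> = (\<Sum>s<k. \<Sum>r<k. (cnj (H r a) * H s b) * (\<Sum>i<N. cnj (Y i r) * Y i s))"
    by (subst sum.swap) (simp add: sum_distrib_left sum.swap[of _ "{..<N}"])
  also have "\<dots> = (\<Sum>s<k. \<Sum>r<k. (cnj (H r a) * H s b) * (if r = s then 1 else 0))"
    using Y unfolding orthonormal_cols_def by (intro sum.cong refl) auto
  also have "\<dots> = (\<Sum>r<k. cnj (H r a) * H r b)" by (simp add: if_distrib cong: if_cong)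
  also have "\<dots> = (if a = b then 1 else 0)" using H a b unfolding orthonormal_cols_def by blast
  finally show "(\<Sum>i<N. cnj (mix_cols k Y H i a) * mix_cols k Y H i b) = (if a = b then 1 else 0)" .
qed

lemma frame_coeff_sum:
  "frame_coeff N U (\<lambda>i. \<Sum>r<k. Y i r * z r) t = (\<Sum>r<k. frame_coeff N U (\<lambda>i. Y i r) t * z r)"
proof (cases "t < N")
  case True then show ?thesis unfolding frame_coeff_def by simp
next
  case False
  have "(\<Sum>i<N. cnj (U $$ (i, t - N)) * (\<Sum>r<k. Y i r * z r))
      = (\<Sum>r<k. (\<Sum>i<N. cnj (U $$ (i, t - N)) * Y i r) * z r)"
    by (simp add: sum_distrib_left sum_distrib_right sum.swap[of _ "{..<N}"] mult.assoc)
  then show ?thesis using False unfolding frame_coeff_def adj_apply_def by simp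
qed

lemma frame_weight_nonneg: "0 \<le> frame_weight N U T Y k"
  unfolding frame_weight_def by (intro sum_nonneg) auto

lemma frame_weight_Suc:
  "frame_weight N U T Y (Suc k)
     = (\<Sum>t\<in>T. (cmod (frame_coeff N U (\<lambda>i. Y i 0) t))^2) + frame_weight N U T (drop_col Y) k"
  unfolding frame_weight_def drop_col_def sum.lessThan_Suc_shift by (simp add: sum.distrib)

lemma frame_weight_add:
  "frame_weight N U T Y (k + d) = frame_weight N U T Y k + frame_weight N U T (\<lambda>i l. Y i (k + l)) d"
  unfolding frame_weight_def
proof (induction d)
  case 0 then show ?case by simp
next
  case (Suc d)
  then show ?case by (simp add: sum.distrib algebra_simps)
qed

lemma frame_weight_swap:
  "frame_weight N U T Y k = (\<Sum>j<k. \<Sum>t\<in>T. (cmod (frame_coeff N U (\<lambda>i. Y i j) t))^2)"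
  unfolding frame_weight_def by (rule sum.swap)

lemma frame_weight_mix_cols:
  assumes H: "orthonormal_rows k k H"
  shows "frame_weight N U T (mix_cols k Y H) k = frame_weight N U T Y k"
proof -
  have H': "\<forall>r<k. \<forall>s<k. (\<Sum>l<k. H r l * cnj (H s l)) = (if r = s then 1 else 0)"
    using H unfolding orthonormal_rows_def by blast
  have "(\<Sum>l<k. (cmod (frame_coeff N U (\<lambda>i. mix_cols k Y H i l) t))^2)
      = (\<Sum>l<k. (cmod (\<Sum>r<k. frame_coeff N U (\<lambda>i. Y i r) t * H r l))^2)" for t
    unfolding mix_cols_def frame_coeff_sum by simp
  then show ?thesis unfolding frame_weight_def sum_cmod_sq_orthonormal_rows[OF H'] by simp
qed

definition frame_rows :: "nat \<Rightarrow> nat set \<Rightarrow> nat set" where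
  "frame_rows N T = {t\<in>T. t < N}"

definition frame_cols :: "nat \<Rightarrow> nat set \<Rightarrow> nat set" where
  "frame_cols N T = (\<lambda>t. t - N) ` {t\<in>T. N \<le> t}"

lemma frame_rows_subset: "T \<subseteq> {..<2 * N} \<Longrightarrow> frame_rows N T \<subseteq> {..<N}"
  unfolding frame_rows_def by auto

lemma frame_cols_subset: "T \<subseteq> {..<2 * N} \<Longrightarrow> frame_cols N T \<subseteq> {..<N}"
  unfolding frame_cols_def by auto

lemma card_frame_rows_cols:
  assumes "finite T"
  shows "card (frame_rows N T) + card (frame_cols N T) = card T"
proof -
  have "card (frame_cols N T) = card {t\<in>T. N \<le> t}"
    unfolding frame_cols_def by (rule card_image) (auto simp: inj_on_def)
  moreover have "T = {t\<in>T. t < N} \<union> {t\<in>T. N \<le> t}" by auto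
  then have "card T = card {t\<in>T. t < N} + card {t\<in>T. N \<le> t}"
    using assms by (metis (no_types, lifting) card_Un_disjoint disjoint_iff finite_Un mem_Collect_eq not_less)
  ultimately show ?thesis unfolding frame_rows_def by simp
qed

lemma sum_frame_coeff_split:
  assumes fin: "finite T"
  shows "(\<Sum>t\<in>T. (cmod (frame_coeff N U \<phi> t))^2)
    = (\<Sum>i\<in>frame_rows N T. (cmod (\<phi> i))^2) + (\<Sum>j\<in>frame_cols N T. (cmod (adj_apply N U \<phi> j))^2)"
proof -
  have "T = {t\<in>T. t < N} \<union> {t\<in>T. N \<le> t}" by auto
  then have "(\<Sum>t\<in>T. (cmod (frame_coeff N U \<phi> t))^2)
      = (\<Sum>t\<in>{t\<in>T. t < N}. (cmod (frame_coeff N U \<phi> t))^2)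
        + (\<Sum>t\<in>{t\<in>T. N \<le> t}. (cmod (frame_coeff N U \<phi> t))^2)"
    using fin by (metis (no_types, lifting) sum.union_disjoint disjoint_iff finite_Un mem_Collect_eq not_less)
  also have "(\<Sum>t\<in>{t\<in>T. N \<le> t}. (cmod (frame_coeff N U \<phi> t))^2)
      = (\<Sum>j\<in>frame_cols N T. (cmod (adj_apply N U \<phi> j))^2)"
    unfolding frame_cols_def by (subst sum.reindex) (auto simp: inj_on_def frame_coeff_def intro!: sum.cong)
  finally show ?thesis unfolding frame_rows_def frame_coeff_def by simp
qed

lemma exists_orthonormal_cols_first:
  assumes Y: "orthonormal_cols N k Y" and z: "\<exists>l<k. z l \<noteq> 0"
  shows "\<exists>Y'. orthonormal_cols N k Y' \<and> frame_weight N U T Y' k = frame_weight N U T Y k \<and>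
     (\<forall>i. Y' i 0 = (\<Sum>r<k. Y i r * z r) / complex_of_real (sqrt (\<Sum>l<k. (cmod (z l))^2)))"
proof -
  define sz where "sz = complex_of_real (sqrt (\<Sum>l<k. (cmod (z l))^2))"
  have k: "0 < k" using z by auto
  obtain H where H: "unitary_fun k H" "\<forall>r<k. H r 0 = z r / sz"
    using unitary_fun_with_first_col[OF k normalize_sq_norm(2)[OF z]] unfolding sz_def by blast
  have "orthonormal_cols N k (mix_cols k Y H)"
    by (rule orthonormal_cols_mix_cols[OF Y]) (use H(1) in \<open>simp add: unitary_fun_def\<close>)
  moreover have "frame_weight N U T (mix_cols k Y H) k = frame_weight N U T Y k"
    by (rule frame_weight_mix_cols) (use H(1) in \<open>simp add: unitary_fun_def\<close>)
  moreover have "mix_cols k Y H i 0 = (\<Sum>r<k. Y i r * z r) / sz" for i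
    unfolding mix_cols_def using H(2) by (simp add: sum_divide_distrib)
  ultimately show ?thesis unfolding sz_def by blast
qed

lemma exists_combination_in_span:
  fixes Y :: "nat \<Rightarrow> nat \<Rightarrow> complex"
  assumes I: "I \<subseteq> {..<N}" and J: "J \<subseteq> {..<N}" and dim: "N < n + card I + card J"
  shows "\<exists>\<alpha> x y. (\<forall>i. i \<notin> I \<longrightarrow> x i = 0) \<and> (\<forall>j. j \<notin> J \<longrightarrow> y j = 0) \<and>
     ((\<exists>a<n. \<alpha> a \<noteq> 0) \<or> (\<exists>i\<in>I. x i \<noteq> 0) \<or> (\<exists>j\<in>J. y j \<noteq> 0)) \<and>
     (\<forall>i<N. (\<Sum>a<n. Y i a * \<alpha> a) = x i + mat_apply N U y i)"
proof -
  have fI: "finite I" and fJ: "finite J" using I J finite_subset by auto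
  define S :: "(nat + (nat + nat)) set" where "S = Inl ` {..<n} \<union> Inr ` (Inl ` I \<union> Inr ` J)"
  have split: "(\<Sum>l\<in>S. f l) = (\<Sum>a<n. f (Inl a)) + (\<Sum>i\<in>I. f (Inr (Inl i))) + (\<Sum>j\<in>J. f (Inr (Inr j)))"
    for f :: "nat + (nat + nat) \<Rightarrow> 'b::comm_monoid_add"
  proof -
    have "(\<Sum>l\<in>S. f l) = (\<Sum>l\<in>Inl ` {..<n}. f l) + (\<Sum>l\<in>Inl ` I \<union> Inr ` J. f (Inr l))"
      unfolding S_def by (subst sum.union_disjoint) (use fI fJ in \<open>auto simp: sum.reindex\<close>)
    also have "(\<Sum>l\<in>Inl ` I \<union> Inr ` J. f (Inr l)) = (\<Sum>i\<in>I. f (Inr (Inl i))) + (\<Sum>j\<in>J. f (Inr (Inr j)))"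
      by (subst sum.union_disjoint) (use fI fJ in \<open>auto simp: sum.reindex\<close>)
    finally show ?thesis by (simp add: sum.reindex add.assoc)
  qed
  have fS: "finite S" unfolding S_def using fI fJ by simp
  have "card S = n + card I + card J"
    using split[of "\<lambda>_. 1 :: nat"] by (simp add: S_def card_eq_sum[symmetric] fI fJ)
  then have NS: "N < card S" using dim by simp
  \<comment> \<open>\<open>S\<close> indexes the \<open>n\<close> columns of \<open>Y\<close> and the vectors \<open>e\<^sub>i\<close>, \<open>U e\<^sub>j\<close>: more than \<open>N\<close> vectors in \<open>\<complex>\<^sup>N\<close>\<close>
  define M where "M i l = (case l of Inl a \<Rightarrow> Y i a | Inr (Inl i') \<Rightarrow> - (if i = i' then 1 else 0)
                                 | Inr (Inr j) \<Rightarrow> - U $$ (i, j))" for i l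
  obtain z where z: "\<exists>l\<in>S. z l \<noteq> 0" and zM: "\<forall>i<N. (\<Sum>l\<in>S. M i l * z l) = 0"
    using exists_kernel_vector_on[OF fS NS, of M] by blast
  define \<alpha> where "\<alpha> a = z (Inl a)" for a
  define x where "x i = (if i \<in> I then z (Inr (Inl i)) else 0)" for i
  define y where "y j = (if j \<in> J then z (Inr (Inr j)) else 0)" for j
  have "(\<Sum>a<n. Y i a * \<alpha> a) = x i + mat_apply N U y i" if i: "i < N" for i
  proof -
    have "(\<Sum>i'\<in>I. (if i = i' then 1 else 0) * z (Inr (Inl i'))) = x i"
      unfolding x_def using fI by (simp add: if_distrib[of "\<lambda>c. c * _"] sum.delta cong: if_cong)
    moreover have "(\<Sum>j\<in>J. U $$ (i, j) * z (Inr (Inr j))) = mat_apply N U y i"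
      unfolding mat_apply_def using J by (subst sum_lessThan_support[OF J]) (auto simp: y_def)
    ultimately have "(\<Sum>a<n. Y i a * \<alpha> a) - x i = mat_apply N U y i"
      using zM[rule_format, OF i] unfolding split \<alpha>_def M_def by (simp add: sum_negf)
    then show ?thesis by (simp add: algebra_simps)
  qed
  moreover have "(\<exists>a<n. \<alpha> a \<noteq> 0) \<or> (\<exists>i\<in>I. x i \<noteq> 0) \<or> (\<exists>j\<in>J. y j \<noteq> 0)"
    using z unfolding S_def \<alpha>_def x_def y_def by auto
  moreover have "(\<forall>i. i \<notin> I \<longrightarrow> x i = 0) \<and> (\<forall>j. j \<notin> J \<longrightarrow> y j = 0)"
    unfolding x_def y_def by simp
  ultimately show ?thesis by blast
qed

lemma inner_bound_ge_1:
  assumes U: "unitary_fun N (\<lambda>i j. U $$ (i,j))" and I: "I \<subseteq> {..<N}" and J: "J \<subseteq> {..<N}"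
    and ob: "inner_bound N U I J c"
    and xs: "\<forall>i. i \<notin> I \<longrightarrow> x i = 0" and ys: "\<forall>j. j \<notin> J \<longrightarrow> y j = 0"
    and nz: "(\<exists>i\<in>I. x i \<noteq> 0) \<or> (\<exists>j\<in>J. y j \<noteq> 0)"
    and zero: "\<forall>i<N. x i + mat_apply N U y i = 0"
  shows "1 \<le> c"
proof -
  define X where "X = sq_norm N x"
  have "sq_norm N y = sq_norm N (mat_apply N U y)" by (rule sq_norm_mat_apply[OF U, symmetric])
  also have "\<dots> = X" unfolding X_def sq_norm_def
    by (intro sum.cong refl) (metis add.commute eq_neg_iff_add_eq_0 lessThan_iff norm_minus_cancel zero)
  finally have XY: "sq_norm N y = X" .
  have X0: "0 < X"
  proof (rule ccontr)
    assume "\<not> 0 < X"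
    then have "sq_norm N x = 0" "sq_norm N y = 0" using XY sq_norm_nonneg[of N x] unfolding X_def by auto
    then show False using nz I J sq_norm_eq_0D by blast
  qed
  have "cinner N x (mat_apply N U y) = (\<Sum>i<N. - (cnj (x i) * x i))" unfolding cinner_def
    by (intro sum.cong refl) (metis add.commute eq_neg_iff_add_eq_0 lessThan_iff mult_minus_right zero)
  also have "\<dots> = - cinner N x x" unfolding cinner_def by (simp add: sum_negf)
  finally have "cinner N x (mat_apply N U y) = - cinner N x x" .
  then have "cmod (cinner N x (mat_apply N U y)) = X" unfolding cinner_self X_def by simp
  moreover have "cmod (cinner N x (mat_apply N U y)) \<le> c * sqrt (sq_norm N x) * sqrt (sq_norm N y)"
    using ob xs ys unfolding inner_bound_def by blast
  ultimately have "X \<le> c * sqrt X * sqrt X" unfolding XY X_def by simp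
  then show ?thesis using X0 by (simp add: mult.assoc)
qed

section \<open>Norms of submatrices of a unitary matrix\<close>

lemma bij_betw_pick:
  assumes "finite S"
  shows "bij_betw (pick S) {..<card S} S"
proof -
  have inj: "inj_on (pick S) {..<card S}"
  proof (rule inj_onI)
    fix a b assume a: "a \<in> {..<card S}" and b: "b \<in> {..<card S}" and e: "pick S a = pick S b"
    show "a = b"
    proof (rule ccontr)
      assume "a \<noteq> b"
      then have "a < b \<or> b < a" by auto
      then show False using pick_mono[of b S a] pick_mono[of a S b] a b e by auto
    qed
  qed
  have sub: "pick S ` {..<card S} \<subseteq> S" using pick_in_set by auto
  have "card (pick S ` {..<card S}) = card S" using card_image[OF inj] by simp
  then have "pick S ` {..<card S} = S" using card_subset_eq[OF assms sub] by simp
  then show ?thesis using inj unfolding bij_betw_def by simp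
qed

lemma sum_pick: "finite S \<Longrightarrow> (\<Sum>b<card S. f (pick S b)) = (\<Sum>j\<in>S. f j)"
  by (rule sum.reindex_bij_betw[OF bij_betw_pick])

lemma Collect_less_mem_eq: "I \<subseteq> {..<N} \<Longrightarrow> {i. i < N \<and> i \<in> I} = I" by auto

lemma dim_submatrix_sub:
  assumes "U \<in> carrier_mat N N" "I \<subseteq> {..<N}" "J \<subseteq> {..<N}"
  shows "dim_row (submatrix U I J) = card I" "dim_col (submatrix U I J) = card J"
  using assms by (auto simp: dim_submatrix Collect_less_mem_eq)

lemma index_submatrix_mult_vec:
  assumes U: "U \<in> carrier_mat N N" and I: "I \<subseteq> {..<N}" and J: "J \<subseteq> {..<N}"
    and v: "dim_vec v = card J" and a: "a < card I"
  shows "(submatrix U I J *\<^sub>v v) $ a = (\<Sum>b<card J. U $$ (pick I a, pick J b) * v $ b)"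
proof -
  have d: "dim_row (submatrix U I J) = card I" "dim_col (submatrix U I J) = card J"
    using dim_submatrix_sub[OF U I J] by auto
  have "(submatrix U I J *\<^sub>v v) $ a = (\<Sum>b<card J. submatrix U I J $$ (a,b) * v $ b)"
    using d a v by (subst index_mult_mat_vec_sum) auto
  also have "\<dots> = (\<Sum>b<card J. U $$ (pick I a, pick J b) * v $ b)"
    using U I J a by (intro sum.cong refl) (subst submatrix_index, auto simp: Collect_less_mem_eq)
  finally show ?thesis .
qed

lemma vnorm_sq: "(vnorm v)^2 = (\<Sum>i<dim_vec v. (cmod (v $ i))^2)"
proof -
  have "0 \<le> (\<Sum>i<dim_vec v. (cmod (v $ i))^2)" by (intro sum_nonneg) auto
  then show ?thesis unfolding vnorm_def by simp
qed

lemma vnorm_nonneg: "0 \<le> vnorm v"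
proof -
  have "0 \<le> (\<Sum>i<dim_vec v. (cmod (v $ i))^2)" by (intro sum_nonneg) auto
  then show ?thesis unfolding vnorm_def by simp
qed

lemma vnorm_smult: "vnorm (k \<cdot>\<^sub>v v) = cmod k * vnorm v"
proof -
  have "(\<Sum>i<dim_vec v. (cmod ((k \<cdot>\<^sub>v v) $ i))^2) = (cmod k)^2 * (\<Sum>i<dim_vec v. (cmod (v $ i))^2)"
    by (simp add: sum_distrib_left norm_mult power_mult_distrib)
  then show ?thesis unfolding vnorm_def by (simp add: real_sqrt_mult)
qed

definition extend_vec :: "nat set \<Rightarrow> complex vec \<Rightarrow> nat \<Rightarrow> complex" where
  "extend_vec J v j = (if j \<in> J then v $ card {a\<in>J. a < j} else 0)"

lemma extend_vec_pick: "finite J \<Longrightarrow> b < card J \<Longrightarrow> extend_vec J v (pick J b) = v $ b"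
  unfolding extend_vec_def using pick_in_set[of b J] card_pick[of b J] by auto

lemma submatrix_mult_vec_extend:
  assumes U: "U \<in> carrier_mat N N" and I: "I \<subseteq> {..<N}" and J: "J \<subseteq> {..<N}"
    and v: "dim_vec v = card J" and a: "a < card I"
  shows "(submatrix U I J *\<^sub>v v) $ a = mat_apply N U (extend_vec J v) (pick I a)"
proof -
  have fJ: "finite J" using J finite_subset by blast
  have "(submatrix U I J *\<^sub>v v) $ a = (\<Sum>b<card J. U $$ (pick I a, pick J b) * extend_vec J v (pick J b))"
    unfolding index_submatrix_mult_vec[OF U I J v a] using extend_vec_pick[OF fJ] by simp
  also have "\<dots> = (\<Sum>j\<in>J. U $$ (pick I a, j) * extend_vec J v j)" by (rule sum_pick[OF fJ])
  also have "\<dots> = mat_apply N U (extend_vec J v) (pick I a)" unfolding mat_apply_def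
    by (rule sum_lessThan_support[symmetric, OF J]) (auto simp: extend_vec_def)
  finally show ?thesis .
qed

lemma sq_norm_extend_vec:
  assumes J: "J \<subseteq> {..<N}" and v: "dim_vec v = card J"
  shows "sq_norm N (extend_vec J v) = (vnorm v)^2"
proof -
  have fJ: "finite J" using J finite_subset by blast
  have "sq_norm N (extend_vec J v) = (\<Sum>j\<in>J. (cmod (extend_vec J v j))^2)" unfolding sq_norm_def
    by (rule sum_lessThan_support[OF J]) (auto simp: extend_vec_def)
  also have "\<dots> = (\<Sum>b<card J. (cmod (extend_vec J v (pick J b)))^2)" by (rule sum_pick[symmetric, OF fJ])
  also have "\<dots> = (\<Sum>b<card J. (cmod (v $ b))^2)" using extend_vec_pick[OF fJ] by simp
  finally show ?thesis unfolding vnorm_sq v .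
qed

lemma vnorm_submatrix_mult_vec_sq:
  assumes U: "U \<in> carrier_mat N N" and I: "I \<subseteq> {..<N}" and J: "J \<subseteq> {..<N}"
    and v: "dim_vec v = card J"
  shows "(vnorm (submatrix U I J *\<^sub>v v))^2 = (\<Sum>i\<in>I. (cmod (mat_apply N U (extend_vec J v) i))^2)"
proof -
  have fI: "finite I" using I finite_subset by blast
  have "(vnorm (submatrix U I J *\<^sub>v v))^2 = (\<Sum>a<card I. (cmod ((submatrix U I J *\<^sub>v v) $ a))^2)"
    unfolding vnorm_sq using dim_submatrix_sub[OF U I J] by simp
  also have "\<dots> = (\<Sum>a<card I. (cmod (mat_apply N U (extend_vec J v) (pick I a)))^2)"
    using submatrix_mult_vec_extend[OF U I J v] by simp
  also have "\<dots> = (\<Sum>i\<in>I. (cmod (mat_apply N U (extend_vec J v) i))^2)" by (rule sum_pick[OF fI])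
  finally show ?thesis .
qed

lemma vnorm_submatrix_mult_le:
  assumes U: "U \<in> carrier_mat N N" and Uu: "unitary_fun N (\<lambda>i j. U$$(i,j))"
    and I: "I \<subseteq> {..<N}" and J: "J \<subseteq> {..<N}" and v: "dim_vec v = card J"
  shows "vnorm (submatrix U I J *\<^sub>v v) \<le> vnorm v"
proof -
  have "(vnorm (submatrix U I J *\<^sub>v v))^2 \<le> sq_norm N (mat_apply N U (extend_vec J v))"
    unfolding vnorm_submatrix_mult_vec_sq[OF U I J v] sq_norm_def
    by (rule sum_mono2) (use I in auto)
  also have "\<dots> = (vnorm v)^2" unfolding sq_norm_mat_apply[OF Uu] sq_norm_extend_vec[OF J v] ..
  finally show ?thesis using vnorm_nonneg power2_le_imp_le by blast
qed

locale unitary_frame =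
  fixes N :: nat and U :: "complex mat"
  assumes Uc: "U \<in> carrier_mat N N" and Uu: "unitary_fun N (\<lambda>i j. U$$(i,j))"
begin

lemma op_norm_submatrix_set:
  assumes I: "I \<subseteq> {..<N}" and J: "J \<subseteq> {..<N}"
  shows "{vnorm (submatrix U I J *\<^sub>v v) | v. v \<in> carrier_vec (dim_col (submatrix U I J)) \<and> vnorm v \<le> 1}
     = {vnorm (submatrix U I J *\<^sub>v v) | v. v \<in> carrier_vec (card J) \<and> vnorm v \<le> 1}"
  using dim_submatrix_sub[OF Uc I J] by simp

lemma op_norm_submatrix_bdd:
  assumes I: "I \<subseteq> {..<N}" and J: "J \<subseteq> {..<N}"
  shows "bdd_above {vnorm (submatrix U I J *\<^sub>v v) | v. v \<in> carrier_vec (card J) \<and> vnorm v \<le> 1}"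
proof (rule bdd_aboveI[of _ 1])
  fix x assume "x \<in> {vnorm (submatrix U I J *\<^sub>v v) | v. v \<in> carrier_vec (card J) \<and> vnorm v \<le> 1}"
  then obtain v where "x = vnorm (submatrix U I J *\<^sub>v v)" "v \<in> carrier_vec (card J)" "vnorm v \<le> 1" by blast
  then show "x \<le> 1" using vnorm_submatrix_mult_le[OF Uc Uu I J, of v] by auto
qed

lemma op_norm_submatrix_nonempty:
  "{vnorm (submatrix U I J *\<^sub>v v) | v. v \<in> carrier_vec (card J) \<and> vnorm v \<le> 1} \<noteq> {}"
proof -
  have "vnorm (0\<^sub>v (card J)) = 0" unfolding vnorm_def by simp
  then show ?thesis
    by (intro ex_in_conv[THEN iffD1] exI[of _ "vnorm (submatrix U I J *\<^sub>v 0\<^sub>v (card J))"]) auto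
qed

lemma op_norm_submatrix_upper:
  assumes I: "I \<subseteq> {..<N}" and J: "J \<subseteq> {..<N}"
    and v: "v \<in> carrier_vec (card J)" "vnorm v \<le> 1"
  shows "vnorm (submatrix U I J *\<^sub>v v) \<le> op_norm (submatrix U I J)"
  unfolding op_norm_def op_norm_submatrix_set[OF I J]
  by (rule cSup_upper[OF _ op_norm_submatrix_bdd[OF I J]]) (use v in blast)

lemma op_norm_submatrix_nonneg:
  assumes I: "I \<subseteq> {..<N}" and J: "J \<subseteq> {..<N}"
  shows "0 \<le> op_norm (submatrix U I J)"
proof -
  have "vnorm (0\<^sub>v (card J)) = 0" unfolding vnorm_def by simp
  then have "vnorm (submatrix U I J *\<^sub>v 0\<^sub>v (card J)) \<le> op_norm (submatrix U I J)"
    by (intro op_norm_submatrix_upper[OF I J]) auto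
  then show ?thesis using vnorm_nonneg order_trans by blast
qed

lemma op_norm_submatrix_le_1:
  assumes I: "I \<subseteq> {..<N}" and J: "J \<subseteq> {..<N}"
  shows "op_norm (submatrix U I J) \<le> 1"
  unfolding op_norm_def op_norm_submatrix_set[OF I J]
proof (rule cSup_least[OF op_norm_submatrix_nonempty])
  fix x assume "x \<in> {vnorm (submatrix U I J *\<^sub>v v) | v. v \<in> carrier_vec (card J) \<and> vnorm v \<le> 1}"
  then obtain v where "x = vnorm (submatrix U I J *\<^sub>v v)" "v \<in> carrier_vec (card J)" "vnorm v \<le> 1" by blast
  then show "x \<le> 1" using vnorm_submatrix_mult_le[OF Uc Uu I J, of v] by auto
qed

lemma op_norm_submatrix_bound:
  assumes I: "I \<subseteq> {..<N}" and J: "J \<subseteq> {..<N}" and v: "v \<in> carrier_vec (card J)"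
  shows "vnorm (submatrix U I J *\<^sub>v v) \<le> op_norm (submatrix U I J) * vnorm v"
proof (cases "vnorm v = 0")
  case True
  have "vnorm (submatrix U I J *\<^sub>v v) \<le> vnorm v" using vnorm_submatrix_mult_le[OF Uc Uu I J] v by auto
  then show ?thesis using True vnorm_nonneg[of "submatrix U I J *\<^sub>v v"] by simp
next
  case False
  then have vp: "0 < vnorm v" using vnorm_nonneg[of v] by simp
  define w where "w = complex_of_real (1 / vnorm v) \<cdot>\<^sub>v v"
  have w: "w \<in> carrier_vec (card J)" using v unfolding w_def by simp
  have vw: "vnorm w = 1" unfolding w_def vnorm_smult norm_of_real using vp by simp
  have M: "submatrix U I J \<in> carrier_mat (card I) (card J)"
    unfolding carrier_mat_def using dim_submatrix_sub[OF Uc I J] by simp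
  have "submatrix U I J *\<^sub>v w = complex_of_real (1 / vnorm v) \<cdot>\<^sub>v (submatrix U I J *\<^sub>v v)"
    unfolding w_def by (rule mult_mat_vec[OF M v])
  then have "vnorm (submatrix U I J *\<^sub>v w) = vnorm (submatrix U I J *\<^sub>v v) / vnorm v"
    using vp by (simp add: vnorm_smult norm_divide)
  moreover have "vnorm (submatrix U I J *\<^sub>v w) \<le> op_norm (submatrix U I J)"
    using op_norm_submatrix_upper[OF I J w] vw by simp
  ultimately show ?thesis using vp by (simp add: divide_le_eq)
qed

lemma inner_bound_submatrix:
  assumes I: "I \<subseteq> {..<N}" and J: "J \<subseteq> {..<N}"
  shows "inner_bound N U I J (op_norm (submatrix U I J))"
  unfolding inner_bound_def
proof (intro allI impI)
  fix x y :: "nat \<Rightarrow> complex" assume xs: "\<forall>i. i \<notin> I \<longrightarrow> x i = 0" and ys: "\<forall>j. j \<notin> J \<longrightarrow> y j = 0"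
  have fI: "finite I" using I finite_subset by blast
  have fJ: "finite J" using J finite_subset by blast
  define v :: "complex vec" where "v = vec (card J) (\<lambda>b. y (pick J b))"
  have vc: "v \<in> carrier_vec (card J)" unfolding v_def by simp
  have ye: "extend_vec J v = y"
  proof
    fix j show "extend_vec J v j = y j"
    proof (cases "j \<in> J")
      case True
      have "card {a\<in>J. a < j} < card J"
        by (rule psubset_card_mono[OF fJ]) (use True in auto)
      then show ?thesis using True pick_card_in_set[OF True] unfolding extend_vec_def v_def by simp
    next
      case False then show ?thesis using ys unfolding extend_vec_def by simp
    qed
  qed
  let ?M = "submatrix U I J"
  have "cinner N x (mat_apply N U y) = (\<Sum>i\<in>I. cnj (x i) * mat_apply N U y i)" unfolding cinner_def
    by (rule sum_lessThan_support[OF I]) (use xs in auto)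
  also have "\<dots> = (\<Sum>a<card I. cnj (x (pick I a)) * mat_apply N U y (pick I a))"
    by (rule sum_pick[symmetric, OF fI])
  also have "\<dots> = (\<Sum>a<card I. cnj (x (pick I a)) * (?M *\<^sub>v v) $ a)"
    using submatrix_mult_vec_extend[OF Uc I J, of v] vc ye by simp
  finally have e: "cinner N x (mat_apply N U y) = (\<Sum>a<card I. cnj (x (pick I a)) * (?M *\<^sub>v v) $ a)" .
  have "(\<Sum>a<card I. (cmod (x (pick I a)))^2) = (\<Sum>i\<in>I. (cmod (x i))^2)" by (rule sum_pick[OF fI])
  also have "\<dots> = sq_norm N x"
    unfolding sq_norm_def by (rule sum_lessThan_support[symmetric, OF I]) (use xs in auto)
  finally have nx: "(\<Sum>a<card I. (cmod (x (pick I a)))^2) = sq_norm N x" .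
  have nMv: "(\<Sum>a<card I. (cmod ((?M *\<^sub>v v) $ a))^2) = (vnorm (?M *\<^sub>v v))^2"
    unfolding vnorm_sq using dim_submatrix_sub[OF Uc I J] by simp
  have ny: "vnorm v = sqrt (sq_norm N y)"
    using sq_norm_extend_vec[OF J, of v] vc ye vnorm_nonneg[of v] by simp
  have "cmod (cinner N x (mat_apply N U y)) \<le> sqrt (sq_norm N x) * vnorm (?M *\<^sub>v v)"
    unfolding e using cauchy_schwarz_cmod[of "\<lambda>a. x (pick I a)" "\<lambda>a. (?M *\<^sub>v v) $ a" "{..<card I}"]
    unfolding nx nMv using vnorm_nonneg[of "?M *\<^sub>v v"] by simp
  also have "\<dots> \<le> sqrt (sq_norm N x) * (op_norm ?M * vnorm v)"
    by (intro mult_left_mono op_norm_submatrix_bound[OF I J vc]) simp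
  finally show "cmod (cinner N x (mat_apply N U y)) \<le> op_norm ?M * sqrt (sq_norm N x) * sqrt (sq_norm N y)"
    unfolding ny by (simp add: algebra_simps)
qed

lemma op_norm_full_rows_ge_1:
  assumes J: "J \<subseteq> {..<N}" and Jne: "J \<noteq> {}"
  shows "1 \<le> op_norm (submatrix U {..<N} J)"
proof -
  have fJ: "finite J" using J finite_subset by blast
  have cJ: "0 < card J" using Jne fJ by (simp add: card_gt_0_iff)
  define v where "v = vec (card J) (\<lambda>b. if b = 0 then (1::complex) else 0)"
  have vc: "v \<in> carrier_vec (card J)" unfolding v_def by simp
  have "(\<Sum>i<card J. (cmod (v $ i))^2) = (\<Sum>i<card J. if i = 0 then 1 else 0)"
    unfolding v_def by (intro sum.cong refl) auto
  also have "\<dots> = 1" using cJ by simp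
  finally have "(vnorm v)^2 = 1" unfolding vnorm_sq using vc by simp
  then have v1: "vnorm v = 1" using vnorm_nonneg[of v] by (simp add: power2_eq_1_iff)
  have "(vnorm (submatrix U {..<N} J *\<^sub>v v))^2 = sq_norm N (mat_apply N U (extend_vec J v))"
    using vnorm_submatrix_mult_vec_sq[OF Uc order_refl J, of v] vc unfolding sq_norm_def by simp
  also have "\<dots> = 1" using sq_norm_mat_apply[OF Uu] sq_norm_extend_vec[OF J, of v] vc v1 by simp
  finally have "vnorm (submatrix U {..<N} J *\<^sub>v v) = 1"
    using vnorm_nonneg[of "submatrix U {..<N} J *\<^sub>v v"] by (simp add: power2_eq_1_iff)
  then show ?thesis using op_norm_submatrix_upper[OF order_refl J vc] v1 by simp
qed

definition submatrix_norms :: "nat \<Rightarrow> real set" where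
  "submatrix_norms k = {op_norm (submatrix U I J) | I J.
     I \<subseteq> {..<N} \<and> J \<subseteq> {..<N} \<and> card I + card J = k + 1}"

lemma s_val_eq_Max: "s_val N U k = Max (submatrix_norms k)"
  unfolding s_val_def submatrix_norms_def ..

lemma finite_submatrix_norms: "finite (submatrix_norms k)"
proof -
  have "submatrix_norms k \<subseteq> (\<lambda>(I,J). op_norm (submatrix U I J)) ` (Pow {..<N} \<times> Pow {..<N})"
    unfolding submatrix_norms_def by auto
  then show ?thesis by (rule finite_subset) auto
qed

lemma op_norm_le_s_val:
  assumes "I \<subseteq> {..<N}" "J \<subseteq> {..<N}" "card I + card J = k + 1"
  shows "op_norm (submatrix U I J) \<le> s_val N U k"
  unfolding s_val_eq_Max
  by (rule Max_ge[OF finite_submatrix_norms]) (use assms in \<open>auto simp: submatrix_norms_def\<close>)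

lemma s_val_eq_1:
  assumes "N \<le> k" "k < 2 * N"
  shows "s_val N U k = 1"
proof -
  define J where "J = {..<k + 1 - N}"
  have J: "J \<subseteq> {..<N}" and "0 \<in> J" using assms unfolding J_def by auto
  then have Jne: "J \<noteq> {}" by blast
  have "card {..<N} + card J = k + 1" using assms unfolding J_def by simp
  then have mem: "op_norm (submatrix U {..<N} J) \<in> submatrix_norms k"
    unfolding submatrix_norms_def using J by blast
  have "Max (submatrix_norms k) \<le> 1"
    using mem finite_submatrix_norms op_norm_submatrix_le_1
    by (subst Max_le_iff) (auto simp: submatrix_norms_def)
  moreover have "1 \<le> Max (submatrix_norms k)"
    using op_norm_full_rows_ge_1[OF J Jne] Max_ge[OF finite_submatrix_norms mem] by simp
  ultimately show ?thesis unfolding s_val_eq_Max by simp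
qed

lemma frame_sum_le_1_plus_s_val:
  assumes T: "T \<subseteq> {..<2 * N}" and n\<phi>: "sq_norm N \<phi> = 1" and cT: "card T = j + 1"
  shows "(\<Sum>t\<in>T. (cmod (frame_coeff N U \<phi> t))^2) \<le> 1 + s_val N U j"
proof -
  note IJ = frame_rows_subset[OF T] frame_cols_subset[OF T]
  have fT: "finite T" using T finite_subset by blast
  have "(\<Sum>t\<in>T. (cmod (frame_coeff N U \<phi> t))^2)
      \<le> 1 + op_norm (submatrix U (frame_rows N T) (frame_cols N T))"
    unfolding sum_frame_coeff_split[OF fT]
    by (rule partial_weight_le_1_plus[OF Uu IJ inner_bound_submatrix[OF IJ]
          op_norm_submatrix_nonneg[OF IJ] n\<phi>])
  also have "op_norm (submatrix U (frame_rows N T) (frame_cols N T)) \<le> s_val N U j"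
    by (rule op_norm_le_s_val[OF IJ]) (use card_frame_rows_cols[OF fT] cT in simp)
  finally show ?thesis by simp
qed

lemma frame_weight_unitary:
  assumes T: "T \<subseteq> {..<2 * N}" and V: "unitary_fun N Y"
  shows "frame_weight N U T Y N = real (card T)"
proof -
  have H: "\<forall>r<N. \<forall>s<N. (\<Sum>l<N. Y r l * cnj (Y s l)) = (if r = s then 1 else 0)"
    using V unfolding unitary_fun_def orthonormal_rows_def by blast
  have "(\<Sum>l<N. (cmod (frame_coeff N U (\<lambda>i. Y i l) t))^2) = 1" if t: "t < 2 * N" for t
  proof (cases "t < N")
    case True
    have "complex_of_real (\<Sum>l<N. (cmod (Y t l))^2) = (\<Sum>l<N. Y t l * cnj (Y t l))"
      by (simp only: of_real_sum complex_norm_square)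
    also have "\<dots> = 1" using H True by auto
    finally show ?thesis using True unfolding frame_coeff_def by (simp only: of_real_eq_1_iff) simp
  next
    case False
    have "(\<Sum>l<N. (cmod (frame_coeff N U (\<lambda>i. Y i l) t))^2) = (\<Sum>r<N. (cmod (cnj (U $$ (r, t - N))))^2)"
      using False sum_cmod_sq_orthonormal_rows[OF H] unfolding frame_coeff_def adj_apply_def by simp
    also have "\<dots> = sq_norm N (\<lambda>r. U $$ (r, t - N))" unfolding sq_norm_def by simp
    also have "\<dots> = 1"
    proof -
      have "(\<Sum>r<N. cnj (U $$ (r, t - N)) * U $$ (r, t - N)) = 1"
        using Uu t False unfolding unitary_fun_def orthonormal_cols_def by auto
      then show ?thesis using cinner_self[of N "\<lambda>r. U $$ (r, t - N)"] unfolding cinner_def by simp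
    qed
    finally show ?thesis .
  qed
  then show ?thesis unfolding frame_weight_def using T by (simp add: subset_eq)
qed

lemma frame_weight_upper_step:
  assumes T: "T \<subseteq> {..<2 * N}" and Y: "orthonormal_cols N (Suc k) Y" and kT: "Suc k \<le> card T"
  shows "\<exists>Y'. orthonormal_cols N (Suc k) Y' \<and> frame_weight N U T Y' (Suc k) = frame_weight N U T Y (Suc k) \<and>
    (\<Sum>t\<in>T. (cmod (frame_coeff N U (\<lambda>i. Y' i 0) t))^2) \<le> 1 + s_val N U (card T - Suc k)"
proof -
  have fT: "finite T" using T finite_subset by blast
  obtain T0 where T0: "T0 \<subseteq> T" "card T0 = k" using obtain_subset_with_card_n[of k T] kT by auto
  have fT0: "finite T0" using T0(1) fT finite_subset by blast
  \<comment> \<open>a unit vector in the span of the columns of \<open>Y\<close> orthogonal to the \<open>k\<close> frame vectors in \<open>T0\<close>\<close>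
  obtain z where z: "\<exists>l<Suc k. z l \<noteq> 0"
    "\<forall>r<k. (\<Sum>l<Suc k. frame_coeff N U (\<lambda>i. Y i l) (pick T0 r) * z l) = 0"
    using exists_kernel_vector[of k "Suc k" "\<lambda>r l. frame_coeff N U (\<lambda>i. Y i l) (pick T0 r)"] by auto
  obtain Y' where Y': "orthonormal_cols N (Suc k) Y'"
      "frame_weight N U T Y' (Suc k) = frame_weight N U T Y (Suc k)"
    and Y'0: "\<forall>i. Y' i 0 = (\<Sum>r<Suc k. Y i r * z r) / complex_of_real (sqrt (\<Sum>l<Suc k. (cmod (z l))^2))"
    using exists_orthonormal_cols_first[OF Y z(1)] by blast
  define \<phi> where "\<phi> i = Y' i 0" for i
  define sz where "sz = complex_of_real (sqrt (\<Sum>l<Suc k. (cmod (z l))^2))"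
  have \<phi>e: "\<phi> = (\<lambda>i. \<Sum>r<Suc k. Y i r * (z r / sz))"
    unfolding \<phi>_def sz_def using Y'0 by (simp add: sum_divide_distrib del: sum.lessThan_Suc)
  have "frame_coeff N U \<phi> t = 0" if t: "t \<in> T0" for t
  proof -
    obtain r where r: "r < k" "t = pick T0 r"
      using bij_betw_pick[OF fT0] t T0(2) unfolding bij_betw_def by auto
    have "frame_coeff N U \<phi> t = (\<Sum>l<Suc k. frame_coeff N U (\<lambda>i. Y i l) t * (z l / sz))"
      unfolding \<phi>e by (rule frame_coeff_sum)
    also have "\<dots> = (\<Sum>l<Suc k. frame_coeff N U (\<lambda>i. Y i l) t * z l) / sz"
      by (simp add: sum_divide_distrib del: sum.lessThan_Suc)
    finally show ?thesis using z(2) r by simp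
  qed
  then have "(\<Sum>t\<in>T0. (cmod (frame_coeff N U \<phi> t))^2) = 0" by simp
  then have "(\<Sum>t\<in>T. (cmod (frame_coeff N U \<phi> t))^2) = (\<Sum>t\<in>T - T0. (cmod (frame_coeff N U \<phi> t))^2)"
    using sum.subset_diff[OF T0(1) fT, of "\<lambda>t. (cmod (frame_coeff N U \<phi> t))^2"] by simp
  also have "\<dots> \<le> 1 + s_val N U (card T - Suc k)"
  proof (rule frame_sum_le_1_plus_s_val)
    show "T - T0 \<subseteq> {..<2 * N}" using T by auto
    show "sq_norm N \<phi> = 1" unfolding \<phi>_def by (rule orthonormal_cols_sq_norm[OF Y'(1) zero_less_Suc])
    show "card (T - T0) = card T - Suc k + 1" using card_Diff_subset[OF fT0 T0(1)] T0(2) kT by simp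
  qed
  finally show ?thesis using Y' unfolding \<phi>_def by blast
qed

lemma frame_weight_upper:
  assumes T: "T \<subseteq> {..<2 * N}"
  shows "orthonormal_cols N k Y \<Longrightarrow> k \<le> card T \<Longrightarrow>
    frame_weight N U T Y k \<le> (\<Sum>j=1..k. 1 + s_val N U (card T - j))"
proof (induction k arbitrary: Y)
  case 0
  then show ?case by (simp add: frame_weight_def)
next
  case (Suc k)
  obtain Y' where Y': "orthonormal_cols N (Suc k) Y'"
      "frame_weight N U T Y' (Suc k) = frame_weight N U T Y (Suc k)"
    and first: "(\<Sum>t\<in>T. (cmod (frame_coeff N U (\<lambda>i. Y' i 0) t))^2) \<le> 1 + s_val N U (card T - Suc k)"
    using frame_weight_upper_step[OF T Suc.prems] by blast
  have "frame_weight N U T (drop_col Y') k \<le> (\<Sum>j=1..k. 1 + s_val N U (card T - j))"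
    using Suc.IH[OF orthonormal_cols_drop_col[OF Y'(1)]] Suc.prems(2) by simp
  then show ?case using first frame_weight_Suc[of N U T Y' k] Y'(2) by simp
qed

lemma frame_sum_ge_1_minus_s_val:
  assumes T: "T \<subseteq> {..<2 * N}" and cT: "card T = Suc k"
    and xs: "\<forall>i. i \<notin> frame_rows N T \<longrightarrow> x i = 0" and ys: "\<forall>j. j \<notin> frame_cols N T \<longrightarrow> y j = 0"
    and \<phi>: "\<forall>i<N. \<phi> i = x i + mat_apply N U y i" and n\<phi>: "sq_norm N \<phi> = 1"
  shows "1 - s_val N U k \<le> (\<Sum>t\<in>T. (cmod (frame_coeff N U \<phi> t))^2)"
proof -
  note IJ = frame_rows_subset[OF T] frame_cols_subset[OF T]
  have fT: "finite T" using T finite_subset by blast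
  have "1 - op_norm (submatrix U (frame_rows N T) (frame_cols N T))
      \<le> (\<Sum>t\<in>T. (cmod (frame_coeff N U \<phi> t))^2)"
    unfolding sum_frame_coeff_split[OF fT]
    by (rule partial_weight_ge_1_minus[OF Uu IJ inner_bound_submatrix[OF IJ]
          op_norm_submatrix_nonneg[OF IJ] xs ys \<phi> n\<phi>])
  moreover have "op_norm (submatrix U (frame_rows N T) (frame_cols N T)) \<le> s_val N U k"
    by (rule op_norm_le_s_val[OF IJ]) (use card_frame_rows_cols[OF fT] cT in simp)
  ultimately show ?thesis by simp
qed

lemma s_val_ge_1_of_frame_dependency:
  assumes T: "T \<subseteq> {..<2 * N}" and cT: "card T = Suc k"
    and xs: "\<forall>i. i \<notin> frame_rows N T \<longrightarrow> x i = 0" and ys: "\<forall>j. j \<notin> frame_cols N T \<longrightarrow> y j = 0"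
    and nz: "(\<exists>i\<in>frame_rows N T. x i \<noteq> 0) \<or> (\<exists>j\<in>frame_cols N T. y j \<noteq> 0)"
    and zero: "\<forall>i<N. x i + mat_apply N U y i = 0"
  shows "1 \<le> s_val N U k"
proof -
  note IJ = frame_rows_subset[OF T] frame_cols_subset[OF T]
  have fT: "finite T" using T finite_subset by blast
  have "1 \<le> op_norm (submatrix U (frame_rows N T) (frame_cols N T))"
    by (rule inner_bound_ge_1[OF Uu IJ inner_bound_submatrix[OF IJ] xs ys nz zero])
  also have "\<dots> \<le> s_val N U k"
    by (rule op_norm_le_s_val[OF IJ]) (use card_frame_rows_cols[OF fT] cT in simp)
  finally show ?thesis .
qed

lemma frame_weight_lower_step:
  assumes T: "T \<subseteq> {..<2 * N}" and Y: "orthonormal_cols N (Suc d) Y"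
    and kd: "k + Suc d = N" and kT: "k < card T"
  shows "\<exists>Y'. orthonormal_cols N (Suc d) Y' \<and> frame_weight N U T Y' (Suc d) = frame_weight N U T Y (Suc d) \<and>
    1 - s_val N U k \<le> (\<Sum>t\<in>T. (cmod (frame_coeff N U (\<lambda>i. Y' i 0) t))^2)"
proof -
  have fT: "finite T" using T finite_subset by blast
  obtain T1 where T1: "T1 \<subseteq> T" "card T1 = Suc k" using obtain_subset_with_card_n[of "Suc k" T] kT by auto
  have T1s: "T1 \<subseteq> {..<2 * N}" using T1(1) T by auto
  have "N < Suc d + card (frame_rows N T1) + card (frame_cols N T1)"
    using card_frame_rows_cols[OF finite_subset[OF T1(1) fT], of N] T1(2) kd by simp
  then obtain \<alpha> x y where xs: "\<forall>i. i \<notin> frame_rows N T1 \<longrightarrow> x i = 0"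
    and ys: "\<forall>j. j \<notin> frame_cols N T1 \<longrightarrow> y j = 0"
    and nz: "(\<exists>a<Suc d. \<alpha> a \<noteq> 0) \<or> (\<exists>i\<in>frame_rows N T1. x i \<noteq> 0) \<or> (\<exists>j\<in>frame_cols N T1. y j \<noteq> 0)"
    and xy: "\<forall>i<N. (\<Sum>a<Suc d. Y i a * \<alpha> a) = x i + mat_apply N U y i"
    using exists_combination_in_span[OF frame_rows_subset[OF T1s] frame_cols_subset[OF T1s],
        where Y = Y and U = U]
    by blast
  show ?thesis
  proof (cases "\<exists>a<Suc d. \<alpha> a \<noteq> 0")
    case True
    define sa where "sa = complex_of_real (sqrt (\<Sum>l<Suc d. (cmod (\<alpha> l))^2))"
    obtain Y' where Y': "orthonormal_cols N (Suc d) Y'"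
      "frame_weight N U T Y' (Suc d) = frame_weight N U T Y (Suc d)"
      and Y'0: "\<forall>i. Y' i 0 = (\<Sum>r<Suc d. Y i r * \<alpha> r) / sa"
      using exists_orthonormal_cols_first[OF Y True] unfolding sa_def by blast
    have "1 - s_val N U k \<le> (\<Sum>t\<in>T1. (cmod (frame_coeff N U (\<lambda>i. Y' i 0) t))^2)"
    proof (rule frame_sum_ge_1_minus_s_val[OF T1s T1(2)])
      show "\<forall>i. i \<notin> frame_rows N T1 \<longrightarrow> x i / sa = 0" "\<forall>j. j \<notin> frame_cols N T1 \<longrightarrow> y j / sa = 0"
        using xs ys by simp_all
      show "\<forall>i<N. Y' i 0 = x i / sa + mat_apply N U (\<lambda>j. y j / sa) i"
        using xy Y'0 unfolding mat_apply_divide by (simp add: add_divide_distrib del: sum.lessThan_Suc)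
      show "sq_norm N (\<lambda>i. Y' i 0) = 1" by (rule orthonormal_cols_sq_norm[OF Y'(1) zero_less_Suc])
    qed
    also have "\<dots> \<le> (\<Sum>t\<in>T. (cmod (frame_coeff N U (\<lambda>i. Y' i 0) t))^2)"
      by (rule sum_mono2[OF fT T1(1)]) auto
    finally show ?thesis using Y' by blast
  next
    case False
    \<comment> \<open>then \<open>x + U y = 0\<close> is a dependency among the frame vectors in \<open>T1\<close>\<close>
    then have "1 \<le> s_val N U k"
      using s_val_ge_1_of_frame_dependency[OF T1s T1(2) xs ys] nz xy by auto
    moreover have "0 \<le> (\<Sum>t\<in>T. (cmod (frame_coeff N U (\<lambda>i. Y i 0) t))^2)" by (intro sum_nonneg) auto
    ultimately show ?thesis using Y by fastforce
  qed
qed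

lemma frame_weight_lower:
  assumes T: "T \<subseteq> {..<2 * N}"
  shows "orthonormal_cols N d Y \<Longrightarrow> k + d = N \<Longrightarrow> k \<le> card T \<Longrightarrow>
    (\<Sum>t\<in>{k..<card T}. 1 - s_val N U t) \<le> frame_weight N U T Y d"
proof (induction d arbitrary: Y k)
  case 0
  have "card T \<le> 2 * N" using card_mono[OF _ T] by simp
  then have "(\<Sum>t\<in>{k..<card T}. 1 - s_val N U t) = 0" using 0 s_val_eq_1 by (intro sum.neutral) auto
  then show ?case by (simp add: frame_weight_def)
next
  case (Suc d)
  show ?case
  proof (cases "k = card T")
    case True
    then show ?thesis using frame_weight_nonneg by simp
  next
    case False
    then have kT: "k < card T" using Suc.prems(3) by simp
    obtain Y' where Y': "orthonormal_cols N (Suc d) Y'"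
        "frame_weight N U T Y' (Suc d) = frame_weight N U T Y (Suc d)"
      and first: "1 - s_val N U k \<le> (\<Sum>t\<in>T. (cmod (frame_coeff N U (\<lambda>i. Y' i 0) t))^2)"
      using frame_weight_lower_step[OF T Suc.prems(1) Suc.prems(2) kT] by blast
    have "(\<Sum>t\<in>{Suc k..<card T}. 1 - s_val N U t) \<le> frame_weight N U T (drop_col Y') d"
      using Suc.IH[OF orthonormal_cols_drop_col[OF Y'(1)]] Suc.prems(2) kT by simp
    then show ?thesis
      using first frame_weight_Suc[of N U T Y' d] Y'(2) kT by (simp add: sum.atLeast_Suc_lessThan)
  qed
qed

end

section \<open>Majorization and the coefficients of \<open>S\<close>\<close>

lemma sum_list_take_nth: "m \<le> length zs \<Longrightarrow> sum_list (take m zs) = (\<Sum>i<m. zs ! (i::nat))"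
  by (simp add: sum_list_sum_nth atLeast0LessThan min_def)

lemma sorted_desc_subset_sum_le:
  fixes zs :: "real list"
  assumes srt: "sorted_wrt (\<ge>) zs" and R: "R \<subseteq> {..<length zs}" and cR: "card R = m"
  shows "(\<Sum>i\<in>R. zs ! i) \<le> (\<Sum>i<m. zs ! i)"
proof (cases "m = 0")
  case True
  then have "R = {}" using cR R finite_subset[OF R] by auto
  then show ?thesis using True by simp
next
  case False
  have fR: "finite R" using R finite_subset by blast
  have mle: "m \<le> length zs" using card_mono[OF _ R] cR by simp
  define v where "v = zs ! (m - 1)"
  have hi: "zs ! i \<le> v" if "i \<in> R - {..<m}" for i
  proof -
    have "m - 1 < i" "i < length zs" using that R False by auto
    then show ?thesis unfolding v_def using sorted_wrt_nth_less[OF srt] by auto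
  qed
  have lo: "v \<le> zs ! i" if "i \<in> {..<m} - R" for i
  proof (cases "i = m - 1")
    case True then show ?thesis unfolding v_def by simp
  next
    case False
    then have "i < m - 1" "m - 1 < length zs" using that mle False by auto
    then show ?thesis unfolding v_def using sorted_wrt_nth_less[OF srt] by auto
  qed
  have c1: "card (R - {..<m}) = card ({..<m} - R)"
  proof -
    have "card (R - {..<m}) = card R - card (R \<inter> {..<m})" by (rule card_Diff_subset_Int) simp
    moreover have "card ({..<m} - R) = card {..<m} - card ({..<m} \<inter> R)"
      by (rule card_Diff_subset_Int) (use fR in simp)
    ultimately show ?thesis using cR by (simp add: Int_commute)
  qed
  have "(\<Sum>i\<in>R. zs ! i) = (\<Sum>i\<in>R \<inter> {..<m}. zs ! i) + (\<Sum>i\<in>R - {..<m}. zs ! i)"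
    using sum.Int_Diff[OF fR] by blast
  also have "(\<Sum>i\<in>R - {..<m}. zs ! i) \<le> (\<Sum>i\<in>R - {..<m}. v)" by (rule sum_mono) (use hi in auto)
  also have "\<dots> = (\<Sum>i\<in>{..<m} - R. v)" using c1 by simp
  also have "\<dots> \<le> (\<Sum>i\<in>{..<m} - R. zs ! i)" by (rule sum_mono) (use lo in auto)
  also have "(\<Sum>i\<in>R \<inter> {..<m}. zs ! i) + (\<Sum>i\<in>{..<m} - R. zs ! i) = (\<Sum>i<m. zs ! i)"
  proof -
    have "(\<Sum>i<m. zs ! i) = (\<Sum>i\<in>{..<m} \<inter> R. zs ! i) + (\<Sum>i\<in>{..<m} - R. zs ! i)"
      using sum.Int_Diff[of "{..<m}"] by blast
    then show ?thesis by (simp add: Int_commute)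
  qed
  finally show ?thesis by simp
qed

lemma rev_sort_permutation:
  fixes xs :: "real list"
  obtains p where "p permutes {..<length xs}" "\<And>i. i < length xs \<Longrightarrow> rev (sort xs) ! i = xs ! p i"
proof -
  have "mset (rev (sort xs)) = mset xs" by simp
  then obtain p where p: "p permutes {..<length xs}" "permute_list p xs = rev (sort xs)"
    by (rule mset_eq_permutation)
  have "rev (sort xs) ! i = xs ! p i" if "i < length xs" for i
    using p(2) permute_list_nth[OF p(1)] that by metis
  then show ?thesis using p(1) that by blast
qed

lemma sum_top_eq_subset_sum:
  fixes xs :: "real list"
  assumes m: "m \<le> length xs"
  shows "\<exists>T. T \<subseteq> {..<length xs} \<and> card T = m \<and> sum_list (take m (rev (sort xs))) = (\<Sum>t\<in>T. xs ! t)"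
proof -
  obtain p where p: "p permutes {..<length xs}" "\<And>i. i < length xs \<Longrightarrow> rev (sort xs) ! i = xs ! p i"
    by (rule rev_sort_permutation[of xs]) blast
  have inj: "inj_on p {..<m}" by (rule permutes_inj_on[OF p(1)])
  have "sum_list (take m (rev (sort xs))) = (\<Sum>i<m. rev (sort xs) ! i)"
    by (rule sum_list_take_nth) (use m in simp)
  also have "\<dots> = (\<Sum>i<m. xs ! p i)" using p(2) m by simp
  also have "\<dots> = (\<Sum>t\<in>p ` {..<m}. xs ! t)" by (rule sum.reindex[symmetric, unfolded o_def, OF inj])
  finally have e: "sum_list (take m (rev (sort xs))) = (\<Sum>t\<in>p ` {..<m}. xs ! t)" .
  have "p ` {..<m} \<subseteq> {..<length xs}" using permutes_image[OF p(1)] m by auto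
  moreover have "card (p ` {..<m}) = m" using card_image[OF inj] by simp
  ultimately show ?thesis using e by blast
qed

lemma subset_sum_le_sum_top:
  fixes ys :: "real list"
  assumes T: "T \<subseteq> {..<length ys}" and cT: "card T = m"
  shows "(\<Sum>t\<in>T. ys ! t) \<le> sum_list (take m (rev (sort ys)))"
proof -
  obtain p where p: "p permutes {..<length ys}" "\<And>i. i < length ys \<Longrightarrow> rev (sort ys) ! i = ys ! p i"
    by (rule rev_sort_permutation[of ys]) blast
  let ?q = "inv_into {..<length ys} p"
  have bp: "bij_betw p {..<length ys} {..<length ys}" by (rule permutes_imp_bij[OF p(1)])
  have bq: "bij_betw ?q {..<length ys} {..<length ys}" by (rule bij_betw_inv_into[OF bp])
  have pq: "p (?q t) = t" if "t < length ys" for t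
    using bij_betw_inv_into_right[OF bp] that by simp
  have injq: "inj_on ?q T" using bij_betw_imp_inj_on[OF bq] T by (rule inj_on_subset)
  have zs_q: "ys ! t = rev (sort ys) ! ?q t" if "t \<in> T" for t
  proof -
    have t: "t < length ys" using that T by auto
    have "?q t < length ys" using bij_betwE[OF bq] t by auto
    then show ?thesis using p(2)[of "?q t"] pq[OF t] by simp
  qed
  have "(\<Sum>t\<in>T. ys ! t) = (\<Sum>t\<in>T. rev (sort ys) ! ?q t)" using zs_q by simp
  also have "\<dots> = (\<Sum>i\<in>?q ` T. rev (sort ys) ! i)" by (rule sum.reindex[symmetric, unfolded o_def, OF injq])
  also have "\<dots> \<le> (\<Sum>i<m. rev (sort ys) ! i)"
  proof (rule sorted_desc_subset_sum_le)
    show "sorted_wrt (\<ge>) (rev (sort ys))" by (simp add: sorted_wrt_rev)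
    show "?q ` T \<subseteq> {..<length (rev (sort ys))}" using bij_betwE[OF bq] T by auto
    show "card (?q ` T) = m" using card_image[OF injq] cT by simp
  qed
  also have "\<dots> = sum_list (take m (rev (sort ys)))"
  proof (rule sum_list_take_nth[symmetric])
    show "m \<le> length (rev (sort ys))" using card_mono[OF _ T] cT by simp
  qed
  finally show ?thesis .
qed

lemma majorized_if_subset_sums_le:
  fixes xs ys :: "real list"
  assumes len: "length xs = L" "length ys = L"
    and sub: "\<And>T. T \<subseteq> {..<L} \<Longrightarrow> (\<Sum>t\<in>T. xs ! t) \<le> (\<Sum>t<card T. ys ! t)"
    and total: "sum_list xs = sum_list ys"
  shows "majorized xs ys"
proof -
  have "sum_list (take m (rev (sort xs))) \<le> sum_list (take m (rev (sort ys)))" if m: "m \<le> L" for m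
  proof -
    obtain T where T: "T \<subseteq> {..<L}" "card T = m" "sum_list (take m (rev (sort xs))) = (\<Sum>t\<in>T. xs ! t)"
      using sum_top_eq_subset_sum[of m xs] m len by auto
    have "(\<Sum>t\<in>T. xs ! t) \<le> (\<Sum>t\<in>{..<m}. ys ! t)" using sub[OF T(1)] T(2) by simp
    also have "\<dots> \<le> sum_list (take m (rev (sort ys)))" by (rule subset_sum_le_sum_top) (use m len in auto)
    finally show ?thesis using T(3) by simp
  qed
  then show ?thesis unfolding majorized_def Let_def using len total by simp
qed

lemma summation_by_parts:
  "(\<Sum>j<n. a j * b j) = (\<Sum>k<n. (a k - a (Suc k)) * (\<Sum>j<Suc k. b j)) + a n * (\<Sum>j<n. (b j :: real))"
  by (induction n) (simp_all add: algebra_simps)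

lemma summation_by_parts_mono:
  fixes a f g :: "nat \<Rightarrow> real"
  assumes mono: "\<forall>k<n. a (Suc k) \<le> a k" and an: "a n = 0"
    and fg: "\<forall>k<n. (\<Sum>j<Suc k. f j) \<le> (\<Sum>j<Suc k. g j)"
  shows "(\<Sum>j<n. a j * f j) \<le> (\<Sum>j<n. a j * g j)"
proof -
  have "(\<Sum>k<n. (a k - a (Suc k)) * (\<Sum>j<Suc k. f j)) \<le> (\<Sum>k<n. (a k - a (Suc k)) * (\<Sum>j<Suc k. g j))"
    by (rule sum_mono, rule mult_left_mono) (use mono fg in auto)
  then show ?thesis unfolding summation_by_parts[of a f n] summation_by_parts[of a g n] an by simp
qed

text \<open>\<open>S_coeff s m j\<close> is the coefficient of \<open>\<lambda>\<^sub>j\<close> in \<open>S\<^sub>m\<close>.\<close>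

definition S_coeff :: "(nat \<Rightarrow> real) \<Rightarrow> nat \<Rightarrow> nat \<Rightarrow> real" where
  "S_coeff s m j = (if j \<le> m div 2 then 1 + s (m - j) else if j \<le> m then
      (if odd m \<and> j = m div 2 + 1 then 1 else 1 - s (j - 1)) else 0)"

lemma sum_atLeastAtMost_split:
  "a \<le> b + 1 \<Longrightarrow> b \<le> c \<Longrightarrow> (\<Sum>j=a..c. f j) = (\<Sum>j=a..b. f j) + (\<Sum>j=Suc b..c. (f j :: real))"
proof -
  assume "a \<le> b + 1" "b \<le> c"
  then have "{a..c} = {a..b} \<union> {Suc b..c}" by auto
  then show ?thesis by (simp add: sum.union_disjoint)
qed

lemma odd_Suc_half_le: "odd m \<Longrightarrow> Suc (m div 2) \<le> (m::nat)" by presburger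
lemma odd_diff_half: "odd m \<Longrightarrow> m - m div 2 = Suc (m div 2)" for m :: nat by presburger

lemma S_val_eq_sum_S_coeff: "S_val lam s m = (\<Sum>j=1..m. lam j * S_coeff s m j)"
proof -
  define n where "n = m div 2"
  show ?thesis
  proof (cases "even m")
    case True
    then have m: "m = 2 * n" unfolding n_def by simp
    have "(\<Sum>j=1..m. lam j * S_coeff s m j)
        = (\<Sum>j=1..n. lam j * S_coeff s m j) + (\<Sum>j=Suc n..m. lam j * S_coeff s m j)"
      by (rule sum_atLeastAtMost_split) (use m in auto)
    also have "(\<Sum>j=1..n. lam j * S_coeff s m j) = (\<Sum>j=1..n. lam j * (1 + s (m - j)))"
      by (intro sum.cong refl) (auto simp: S_coeff_def n_def)
    also have "(\<Sum>j=Suc n..m. lam j * S_coeff s m j) = (\<Sum>j=Suc n..m. lam j * (1 - s (j - 1)))"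
      using True by (intro sum.cong refl) (auto simp: S_coeff_def n_def)
    finally show ?thesis unfolding S_val_def Let_def n_def[symmetric] using True by simp
  next
    case False
    then have m: "m = 2 * n + 1" unfolding n_def by simp
    have "(\<Sum>j=1..m. lam j * S_coeff s m j)
        = (\<Sum>j=1..n. lam j * S_coeff s m j) + (\<Sum>j=Suc n..m. lam j * S_coeff s m j)"
      by (rule sum_atLeastAtMost_split) (use m in auto)
    also have "(\<Sum>j=Suc n..m. lam j * S_coeff s m j)
        = (\<Sum>j=Suc n..Suc n. lam j * S_coeff s m j) + (\<Sum>j=Suc (Suc n)..m. lam j * S_coeff s m j)"
      by (rule sum_atLeastAtMost_split) (use m in auto)
    also have "(\<Sum>j=Suc n..Suc n. lam j * S_coeff s m j) = lam (Suc n) * S_coeff s m (Suc n)" by simp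
    also have "S_coeff s m (Suc n) = 1" using False odd_Suc_half_le[of m] unfolding S_coeff_def n_def by auto
    also have "(\<Sum>j=1..n. lam j * S_coeff s m j) = (\<Sum>j=1..n. lam j * (1 + s (m - j)))"
      by (intro sum.cong refl) (auto simp: S_coeff_def n_def)
    also have "(\<Sum>j=Suc (Suc n)..m. lam j * S_coeff s m j) = (\<Sum>j=n+2..m. lam j * (1 - s (j - 1)))"
      using False by (intro sum.cong refl) (auto simp: S_coeff_def n_def)
    finally show ?thesis unfolding S_val_def Let_def n_def[symmetric] using False by simp
  qed
qed

lemma sum_S_coeff_low: "k \<le> m div 2 \<Longrightarrow> (\<Sum>j=1..k. S_coeff s m j) = (\<Sum>j=1..k. 1 + s (m - j))"
  by (intro sum.cong refl) (auto simp: S_coeff_def)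

lemma sum_atLeastAtMost_reflect:
  assumes nm: "n \<le> (m::nat)"
  shows "(\<Sum>j=1..n. s (m - j)) = (\<Sum>t\<in>{m-n..<m}. (s t :: real))"
proof (rule sum.reindex_bij_witness[of _ "\<lambda>t. m - t" "\<lambda>j. m - j"])
  fix a assume a: "a \<in> {1..n}"
  show "m - (m - a) = a" using a nm by auto
  show "m - a \<in> {m - n..<m}" using a nm by auto
  show "s (m - a) = s (m - a)" ..
next
  fix b assume b: "b \<in> {m - n..<m}"
  show "m - (m - b) = b" using b nm by auto
  show "m - b \<in> {1..n}" using b nm by auto
qed

lemma sum_atLeastAtMost_shift: "(\<Sum>j=Suc p..k. s (j - 1)) = (\<Sum>t\<in>{p..<k}. (s t :: real))"
  by (rule sum.reindex_bij_witness[of _ "\<lambda>t. Suc t" "\<lambda>j. j - 1"]) auto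

lemma sum_S_coeff_high:
  assumes k1: "m - m div 2 \<le> k" and k2: "k \<le> m"
  shows "(\<Sum>j=1..k. S_coeff s m j) = real k + (\<Sum>t\<in>{k..<m}. s t)"
proof -
  define n where "n = m div 2"
  define p where "p = m - n"
  have np: "n \<le> p" "p \<le> k" "p \<le> m" using k1 k2 unfolding p_def n_def by auto
  have "(\<Sum>j=1..k. S_coeff s m j) = (\<Sum>j=1..n. S_coeff s m j) + (\<Sum>j=Suc n..k. S_coeff s m j)"
    by (rule sum_atLeastAtMost_split) (use np in auto)
  also have "(\<Sum>j=Suc n..k. S_coeff s m j) = (\<Sum>j=Suc n..p. S_coeff s m j) + (\<Sum>j=Suc p..k. S_coeff s m j)"
    by (rule sum_atLeastAtMost_split) (use np in auto)
  also have "(\<Sum>j=1..n. S_coeff s m j) = (\<Sum>j=1..n. 1 + s (m - j))"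
    unfolding n_def by (rule sum_S_coeff_low) simp
  also have "\<dots> = real n + (\<Sum>t\<in>{p..<m}. s t)"
  proof -
    have "(\<Sum>j=1..n. s (m - j)) = (\<Sum>t\<in>{p..<m}. s t)"
      unfolding p_def by (rule sum_atLeastAtMost_reflect) (simp add: n_def)
    then show ?thesis unfolding sum.distrib by simp
  qed
  also have "(\<Sum>j=Suc n..p. S_coeff s m j) = real p - real n"
  proof (cases "even m")
    case True
    then have "p = n" unfolding p_def n_def by auto
    then show ?thesis by simp
  next
    case False
    then have pn: "p = Suc n" unfolding p_def n_def by presburger
    then show ?thesis using False odd_Suc_half_le[of m] by (simp add: S_coeff_def n_def)
  qed
  also have "(\<Sum>j=Suc p..k. S_coeff s m j) = (\<Sum>j=Suc p..k. 1 - s (j - 1))"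
  proof (intro sum.cong refl)
    fix j assume j: "j \<in> {Suc p..k}"
    then have "\<not> j \<le> m div 2" "j \<le> m" "\<not> (odd m \<and> j = m div 2 + 1)"
      using np k2 odd_diff_half[of m] unfolding p_def n_def by auto
    then show "S_coeff s m j = 1 - s (j - 1)" unfolding S_coeff_def by auto
  qed
  also have "\<dots> = real k - real p - (\<Sum>t\<in>{p..<k}. s t)"
    unfolding sum_subtractf sum_atLeastAtMost_shift using np by simp
  also have "(\<Sum>t\<in>{p..<m}. s t) = (\<Sum>t\<in>{p..<k}. s t) + (\<Sum>t\<in>{k..<m}. s t)"
    by (rule sum.atLeastLessThan_concat[symmetric]) (use np k2 in auto)
  finally show ?thesis by simp
qed

lemma sum_S_coeff_beyond:
  assumes "m \<le> k"
  shows "(\<Sum>j=1..k. S_coeff s m j) = real m"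
proof -
  have "(\<Sum>j=1..k. S_coeff s m j) = (\<Sum>j=1..m. S_coeff s m j) + (\<Sum>j=Suc m..k. S_coeff s m j)"
    by (rule sum_atLeastAtMost_split) (use assms in auto)
  also have "(\<Sum>j=Suc m..k. S_coeff s m j) = 0" by (intro sum.neutral) (auto simp: S_coeff_def)
  also have "(\<Sum>j=1..m. S_coeff s m j) = real m" using sum_S_coeff_high[of m m s] by simp
  finally show ?thesis by simp
qed

lemma S_val_eq_sum_eigen:
  "S_val (\<lambda>j. if 1 \<le> j \<and> j \<le> N then ev ! (j - 1) else 0) s m = (\<Sum>j<N. ev ! j * S_coeff s m (Suc j))"
proof -
  define lam where "lam = (\<lambda>j. if 1 \<le> j \<and> j \<le> N then ev ! (j - 1) else (0::real))"
  have "S_val lam s m = (\<Sum>j=1..m + N. lam j * S_coeff s m j)"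
    unfolding S_val_eq_sum_S_coeff by (rule sum.mono_neutral_left) (auto simp: S_coeff_def)
  also have "\<dots> = (\<Sum>j=1..N. lam j * S_coeff s m j)"
    by (rule sum.mono_neutral_right) (auto simp: lam_def)
  also have "\<dots> = (\<Sum>j<N. ev ! j * S_coeff s m (Suc j))"
    by (simp add: sum.atLeast1_atMost_eq lam_def)
  finally show ?thesis unfolding lam_def .
qed

context unitary_frame
begin

lemma frame_weight_le_sum_S_coeff:
  assumes T: "T \<subseteq> {..<2 * N}" and V: "unitary_fun N Y" and KN: "K \<le> N"
  shows "frame_weight N U T Y K \<le> (\<Sum>j=1..K. S_coeff (s_val N U) (card T) j)"
proof -
  define m where "m = card T"
  define s where "s = s_val N U"
  have oN: "orthonormal_cols N N Y" using V unfolding unitary_fun_def by simp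
  have split: "real m = frame_weight N U T Y K + frame_weight N U T (\<lambda>i l. Y i (K + l)) (N - K)"
    using frame_weight_add[of N U T Y K "N - K"] frame_weight_unitary[OF T V] KN unfolding m_def by simp
  consider "K \<le> m div 2" | "m div 2 < K" "K \<le> m" | "m < K" by linarith
  then show ?thesis
  proof cases
    case 1
    have "frame_weight N U T Y K \<le> (\<Sum>j=1..K. 1 + s (m - j))"
      using frame_weight_upper[OF T orthonormal_cols_mono[OF oN KN]] 1 unfolding m_def s_def by simp
    then show ?thesis using sum_S_coeff_low[OF 1, of s] unfolding s_def m_def by simp
  next
    case 2
    \<comment> \<open>the weight of all \<open>N\<close> columns is \<open>m\<close>\<close>
    have "(\<Sum>t\<in>{K..<m}. 1 - s t) \<le> frame_weight N U T (\<lambda>i l. Y i (K + l)) (N - K)"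
      using frame_weight_lower[OF T orthonormal_cols_shift] oN KN 2 unfolding m_def s_def by simp
    moreover have "(\<Sum>t\<in>{K..<m}. 1 - s t) = real m - real K - (\<Sum>t\<in>{K..<m}. s t)"
      using 2 by (simp add: sum_subtractf of_nat_diff)
    ultimately have "frame_weight N U T Y K \<le> real K + (\<Sum>t\<in>{K..<m}. s t)" using split by simp
    also have "\<dots> = (\<Sum>j=1..K. S_coeff s m j)" by (rule sum_S_coeff_high[symmetric]) (use 2 in auto)
    finally show ?thesis unfolding s_def m_def .
  next
    case 3
    then show ?thesis using split frame_weight_nonneg sum_S_coeff_beyond[of m K]
      unfolding m_def by fastforce
  qed
qed

lemma frame_sum_le_S_val:
  assumes T: "T \<subseteq> {..<2 * N}" and V: "unitary_fun N Y"
    and srt: "sorted_wrt (\<ge>) ev" and len: "length ev = N" and ev0: "\<forall>j<N. 0 \<le> ev ! j"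
  shows "(\<Sum>j<N. ev ! j * (\<Sum>t\<in>T. (cmod (frame_coeff N U (\<lambda>i. Y i j) t))^2))
       \<le> S_val (\<lambda>j. if 1 \<le> j \<and> j \<le> N then ev ! (j - 1) else 0) (s_val N U) (card T)"
proof -
  define f where "f j = (\<Sum>t\<in>T. (cmod (frame_coeff N U (\<lambda>i. Y i j) t))^2)" for j
  define g where "g j = S_coeff (s_val N U) (card T) (Suc j)" for j
  define a where "a j = (if j < N then ev ! j else 0)" for j
  have "(\<Sum>j<Suc k. f j) \<le> (\<Sum>j<Suc k. g j)" if "k < N" for k
    using frame_weight_le_sum_S_coeff[OF T V, of "Suc k"] that
    unfolding f_def g_def frame_weight_swap by (simp add: sum.atLeast1_atMost_eq)
  moreover have "a (Suc k) \<le> a k" if k: "k < N" for k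
    using sorted_wrt_nth_less[OF srt, of k "Suc k"] len k ev0 unfolding a_def by auto
  ultimately have "(\<Sum>j<N. a j * f j) \<le> (\<Sum>j<N. a j * g j)"
    by (intro summation_by_parts_mono) (auto simp: a_def)
  then show ?thesis unfolding S_val_eq_sum_eigen f_def g_def a_def by simp
qed

end

section \<open>Density matrices\<close>

lemma quadratic_form_spectral:
  fixes u :: "nat \<Rightarrow> complex"
  assumes rep: "\<forall>i<N. \<forall>k<N. \<rho> $$ (i,k) = (\<Sum>j<N. V $$ (i,j) * complex_of_real (ev ! j) * cnj (V $$ (k,j)))"
  shows "(\<Sum>a<N. \<Sum>b<N. cnj (u a) * \<rho> $$ (a,b) * u b)
       = complex_of_real (\<Sum>j<N. ev ! j * (cmod (adj_apply N V u j))^2)"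
proof -
  define F where "F a b j = complex_of_real (ev ! j) * ((cnj (u a) * V $$ (a,j)) * (cnj (V $$ (b,j)) * u b))"
    for a b j
  have "(\<Sum>a<N. \<Sum>b<N. cnj (u a) * \<rho> $$ (a,b) * u b) = (\<Sum>a<N. \<Sum>b<N. \<Sum>j<N. F a b j)"
    using rep unfolding F_def by (intro sum.cong refl) (simp add: sum_distrib_left sum_distrib_right ac_simps)
  also have "\<dots> = (\<Sum>a<N. \<Sum>j<N. \<Sum>b<N. F a b j)" by (rule sum.cong[OF refl], rule sum.swap)
  also have "\<dots> = (\<Sum>j<N. \<Sum>a<N. \<Sum>b<N. F a b j)" by (rule sum.swap)
  also have "\<dots> = (\<Sum>j<N. complex_of_real (ev ! j) *
      ((\<Sum>a<N. cnj (u a) * V $$ (a,j)) * (\<Sum>b<N. cnj (V $$ (b,j)) * u b)))"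
    unfolding F_def by (intro sum.cong refl) (subst sum_product, simp add: sum_distrib_left)
  also have "\<dots> = (\<Sum>j<N. complex_of_real (ev ! j) * complex_of_real ((cmod (adj_apply N V u j))^2))"
  proof -
    have "(\<Sum>a<N. cnj (u a) * V $$ (a,j)) * (\<Sum>b<N. cnj (V $$ (b,j)) * u b)
        = complex_of_real ((cmod (adj_apply N V u j))^2)" for j
      unfolding cnj_mult_self[symmetric] adj_apply_def by (simp add: mult.commute)
    then show ?thesis by (simp only:)
  qed
  also have "\<dots> = complex_of_real (\<Sum>j<N. ev ! j * (cmod (adj_apply N V u j))^2)"
    by (simp only: of_real_sum of_real_mult)
  finally show ?thesis .
qed

lemma diag_adjoint_conj:
  assumes Uc: "U \<in> carrier_mat N N" and rc: "\<rho> \<in> carrier_mat N N"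
    and rep: "\<forall>i<N. \<forall>k<N. \<rho> $$ (i,k) = (\<Sum>j<N. V $$ (i,j) * complex_of_real (ev ! j) * cnj (V $$ (k,j)))"
    and i: "i < N"
  shows "(mat_adjoint U * \<rho> * U) $$ (i,i)
       = complex_of_real (\<Sum>j<N. ev ! j * (cmod (adj_apply N U (\<lambda>a. V $$ (a,j)) i))^2)"
proof -
  have UR: "mat_adjoint U * \<rho> \<in> carrier_mat N N"
    by (rule mult_carrier_mat[OF mat_adjoint_carrier[OF Uc] rc])
  have "(mat_adjoint U * \<rho> * U) $$ (i,i) = (\<Sum>b<N. (mat_adjoint U * \<rho>) $$ (i,b) * U $$ (b,i))"
    using UR Uc i by (subst index_mult_mat_sum) auto
  also have "\<dots> = (\<Sum>b<N. (\<Sum>a<N. cnj (U $$ (a,i)) * \<rho> $$ (a,b)) * U $$ (b,i))"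
    using Uc rc i by (intro sum.cong refl) (subst index_mult_mat_sum, auto)
  also have "\<dots> = (\<Sum>a<N. \<Sum>b<N. cnj (U $$ (a,i)) * \<rho> $$ (a,b) * U $$ (b,i))"
    by (subst sum.swap) (simp add: sum_distrib_right)
  also have "\<dots> = complex_of_real (\<Sum>j<N. ev ! j * (cmod (adj_apply N V (\<lambda>a. U $$ (a,i)) j))^2)"
    by (rule quadratic_form_spectral[OF rep])
  also have "(\<lambda>j. cmod (adj_apply N V (\<lambda>a. U $$ (a,i)) j)) = (\<lambda>j. cmod (adj_apply N U (\<lambda>a. V $$ (a,j)) i))"
  proof
    fix j
    have "adj_apply N V (\<lambda>a. U $$ (a,i)) j = cnj (adj_apply N U (\<lambda>a. V $$ (a,j)) i)"
      unfolding adj_apply_def by (simp add: mult.commute)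
    then show "cmod (adj_apply N V (\<lambda>a. U $$ (a,i)) j) = cmod (adj_apply N U (\<lambda>a. V $$ (a,j)) i)" by simp
  qed
  finally show ?thesis .
qed

lemma diag_spectral:
  assumes rep: "\<forall>i<N. \<forall>k<N. \<rho> $$ (i,k) = (\<Sum>j<N. V $$ (i,j) * complex_of_real (ev ! j) * cnj (V $$ (k,j)))"
    and i: "i < N"
  shows "\<rho> $$ (i,i) = complex_of_real (\<Sum>j<N. ev ! j * (cmod (V $$ (i,j)))^2)"
  using rep i by (simp add: of_real_sum complex_norm_square ac_simps del: of_real_power)

lemma psd_spectral_eigenvalue_nonneg:
  assumes rc: "\<rho> \<in> carrier_mat N N" and psd: "\<forall>v \<in> carrier_vec N. conjugate v \<bullet> (\<rho> *\<^sub>v v) \<ge> 0"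
    and V: "unitary_mat N V"
    and rep: "\<forall>i<N. \<forall>k<N. \<rho> $$ (i,k) = (\<Sum>j<N. V $$ (i,j) * complex_of_real (ev ! j) * cnj (V $$ (k,j)))"
    and j: "j < N"
  shows "0 \<le> ev ! j"
proof -
  have Vc: "V \<in> carrier_mat N N" using V unfolding unitary_mat_def by auto
  have Vo: "(\<Sum>b<N. cnj (V $$ (b,l)) * V $$ (b,j)) = (if l = j then 1 else 0)" if "l < N" for l
    using unitary_fun_of_unitary_mat[OF V] that j unfolding unitary_fun_def orthonormal_cols_def by auto
  define v where "v = col V j"
  have vc: "v \<in> carrier_vec N" unfolding v_def carrier_vec_def using Vc by simp
  have rv: "(\<rho> *\<^sub>v v) $ a = V $$ (a,j) * complex_of_real (ev ! j)" if a: "a < N" for a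
  proof -
    have "(\<rho> *\<^sub>v v) $ a = (\<Sum>b<N. \<rho> $$ (a,b) * V $$ (b,j))"
      using rc vc a Vc j unfolding v_def by (subst index_mult_mat_vec_sum) auto
    also have "\<dots> = (\<Sum>b<N. \<Sum>l<N. V $$ (a,l) * complex_of_real (ev ! l) * (cnj (V $$ (b,l)) * V $$ (b,j)))"
      using rep a by (simp add: sum_distrib_right mult.assoc)
    also have "\<dots> = (\<Sum>l<N. V $$ (a,l) * complex_of_real (ev ! l) * (\<Sum>b<N. cnj (V $$ (b,l)) * V $$ (b,j)))"
      by (subst sum.swap) (simp add: sum_distrib_left)
    also have "\<dots> = (\<Sum>l<N. V $$ (a,l) * complex_of_real (ev ! l) * (if l = j then 1 else 0))"
      using Vo by (intro sum.cong refl) auto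
    finally show ?thesis using j by (simp add: if_distrib cong: if_cong)
  qed
  have "conjugate v \<bullet> (\<rho> *\<^sub>v v) = complex_of_real (ev ! j) * (\<Sum>a<N. cnj (V $$ (a,j)) * V $$ (a,j))"
    unfolding scalar_prod_def using rc vc Vc j rv unfolding v_def
    by (simp add: atLeast0LessThan sum_distrib_left ac_simps)
  also have "\<dots> = complex_of_real (ev ! j)" using Vo[OF j] by simp
  finally have "0 \<le> complex_of_real (ev ! j)" using psd vc by metis
  then show ?thesis by (simp add: less_eq_complex_def)
qed

lemma spectral_trace:
  assumes rc: "\<rho> \<in> carrier_mat N N" and V: "unitary_mat N V"
    and rep: "\<forall>i<N. \<forall>k<N. \<rho> $$ (i,k) = (\<Sum>j<N. V $$ (i,j) * complex_of_real (ev ! j) * cnj (V $$ (k,j)))"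
  shows "mat_trace \<rho> = complex_of_real (\<Sum>j<N. ev ! j)"
proof -
  have col: "(\<Sum>i<N. (cmod (V $$ (i,j)))^2) = 1" if "j < N" for j
    using sq_norm_col_unitary[OF unitary_fun_of_unitary_mat[OF V] that] unfolding sq_norm_def .
  have "mat_trace \<rho> = (\<Sum>i<N. complex_of_real (\<Sum>j<N. ev ! j * (cmod (V $$ (i,j)))^2))"
    unfolding mat_trace_def using rc diag_spectral[OF rep] by simp
  also have "\<dots> = complex_of_real (\<Sum>i<N. \<Sum>j<N. ev ! j * (cmod (V $$ (i,j)))^2)"
    by (simp only: of_real_sum)
  also have "\<dots> = complex_of_real (\<Sum>j<N. ev ! j * (\<Sum>i<N. (cmod (V $$ (i,j)))^2))"
    by (subst sum.swap) (simp add: sum_distrib_left)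
  finally show ?thesis using col by simp
qed

lemma sum_lessThan_add: "(\<Sum>t<(a::nat) + b. f t) = (\<Sum>t<a. f t) + (\<Sum>t<b. f (a + t) :: real)"
  by (induction b) (simp_all add: algebra_simps)

lemma sum_frame_coeff_all:
  assumes U: "unitary_fun N (\<lambda>i j. U $$ (i,j))" and n\<phi>: "sq_norm N \<phi> = 1"
  shows "(\<Sum>t<2 * N. (cmod (frame_coeff N U \<phi> t))^2) = 2"
proof -
  have "(\<Sum>t<2 * N. (cmod (frame_coeff N U \<phi> t))^2) = sq_norm N \<phi> + sq_norm N (adj_apply N U \<phi>)"
    using sum_lessThan_add[of "\<lambda>t. (cmod (frame_coeff N U \<phi> t))^2" N N]
    unfolding sq_norm_def frame_coeff_def by (simp add: mult_2)
  then show ?thesis using sq_norm_adj_apply[OF U] n\<phi> by simp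
qed

lemma length_W_vec: "length (W_vec N lam s) = 2 * N"
  unfolding W_vec_def by simp

lemma sum_W_vec_prefix:
  assumes "m \<le> 2 * N"
  shows "(\<Sum>t<m. W_vec N lam s ! t) = S_val lam s m"
proof -
  have "(\<Sum>t<m. W_vec N lam s ! t) = (\<Sum>t<m. S_val lam s (Suc t) - S_val lam s t)"
    using assms unfolding W_vec_def by (intro sum.cong refl) (simp del: upt_Suc)
  also have "\<dots> = S_val lam s m - S_val lam s 0" by (rule sum_lessThan_telescope)
  also have "S_val lam s 0 = 0" unfolding S_val_def by simp
  finally show ?thesis by simp
qed

lemma (in unitary_frame) S_val_full:
  "S_val (\<lambda>j. if 1 \<le> j \<and> j \<le> N then ev ! (j - 1) else 0) (s_val N U) (2 * N) = 2 * (\<Sum>j<N. ev ! j)"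
proof -
  have "S_coeff (s_val N U) (2 * N) (Suc j) = 2" if "j < N" for j
    using s_val_eq_1[of "2 * N - Suc j"] that unfolding S_coeff_def by simp
  then show ?thesis unfolding S_val_eq_sum_eigen by (simp add: sum_distrib_left mult.commute)
qed

lemma sum_diag_concat:
  assumes Uc: "U \<in> carrier_mat N N" and rc: "\<rho> \<in> carrier_mat N N"
    and rep: "\<forall>i<N. \<forall>k<N. \<rho> $$ (i,k) = (\<Sum>j<N. V $$ (i,j) * complex_of_real (ev ! j) * cnj (V $$ (k,j)))"
    and T: "T \<subseteq> {..<2 * N}"
  shows "(\<Sum>t\<in>T. (map (\<lambda>i. Re (\<rho> $$ (i,i))) [0..<N] @
                  map (\<lambda>i. Re ((mat_adjoint U * \<rho> * U) $$ (i,i))) [0..<N]) ! t)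
       = (\<Sum>j<N. ev ! j * (\<Sum>t\<in>T. (cmod (frame_coeff N U (\<lambda>i. V $$ (i,j)) t))^2))"
proof -
  have "(map (\<lambda>i. Re (\<rho> $$ (i,i))) [0..<N] @ map (\<lambda>i. Re ((mat_adjoint U * \<rho> * U) $$ (i,i))) [0..<N]) ! t
       = (\<Sum>j<N. ev ! j * (cmod (frame_coeff N U (\<lambda>i. V $$ (i,j)) t))^2)" if t: "t \<in> T" for t
  proof (cases "t < N")
    case True
    then show ?thesis using diag_spectral[OF rep True] by (simp add: nth_append frame_coeff_def)
  next
    case False
    then have "t - N < N" using t T by auto
    then show ?thesis using False diag_adjoint_conj[OF Uc rc rep] by (simp add: nth_append frame_coeff_def)
  qed
  then show ?thesis by (simp add: sum.swap[of _ _ T] sum_distrib_left)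
qed

lemma density_spectral_decomposition:
  assumes "density_mat N \<rho>" and "char_poly \<rho> = (\<Prod>x\<leftarrow>ev. [:- complex_of_real x, 1:])"
  shows "\<exists>V. unitary_mat N V \<and>
    (\<forall>i<N. \<forall>k<N. \<rho> $$ (i,k) = (\<Sum>j<N. V $$ (i,j) * complex_of_real (ev ! j) * cnj (V $$ (k,j)))) \<and>
    (\<forall>j<N. 0 \<le> ev ! j) \<and> (\<Sum>j<N. ev ! j) = 1"
proof -
  have rc: "\<rho> \<in> carrier_mat N N" and herm: "mat_adjoint \<rho> = \<rho>" and tr: "mat_trace \<rho> = 1"
    and psd: "\<forall>v \<in> carrier_vec N. conjugate v \<bullet> (\<rho> *\<^sub>v v) \<ge> 0"
    using assms(1) unfolding density_mat_def by auto
  obtain V where V: "unitary_mat N V"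
    and rep: "\<forall>i<N. \<forall>k<N. \<rho> $$ (i,k) = (\<Sum>j<N. V $$ (i,j) * complex_of_real (ev ! j) * cnj (V $$ (k,j)))"
    using hermitian_spectral_decomposition[OF rc herm assms(2)] by blast
  moreover have "\<forall>j<N. 0 \<le> ev ! j" using psd_spectral_eigenvalue_nonneg[OF rc psd V rep] by blast
  moreover have "(\<Sum>j<N. ev ! j) = 1" using spectral_trace[OF rc V rep] tr of_real_eq_1_iff by metis
  ultimately show ?thesis by blast
qed

theorem theorem1:
  fixes N :: nat and U \<rho> :: "complex mat" and ev :: "real list"
  assumes "N \<ge> 1"
    and "unitary_mat N U"
    and "density_mat N \<rho>"
    and "length ev = N"
    and "sorted_wrt (\<ge>) ev"
    and "char_poly \<rho> = (\<Prod>x\<leftarrow>ev. [:- complex_of_real x, 1:])"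
  shows "majorized
           (map (\<lambda>i. Re (\<rho> $$ (i,i))) [0..<N] @
            map (\<lambda>i. Re ((mat_adjoint U * \<rho> * U) $$ (i,i))) [0..<N])
           (W_vec N (\<lambda>j. if 1 \<le> j \<and> j \<le> N then ev ! (j - 1) else 0) (s_val N U))"
proof -
  have Uc: "U \<in> carrier_mat N N" using assms(2) unfolding unitary_mat_def by auto
  interpret unitary_frame N U using Uc unitary_fun_of_unitary_mat[OF assms(2)] by unfold_locales
  have rc: "\<rho> \<in> carrier_mat N N" using assms(3) unfolding density_mat_def by auto
  obtain V where V: "unitary_mat N V"
    and rep: "\<forall>i<N. \<forall>k<N. \<rho> $$ (i,k) = (\<Sum>j<N. V $$ (i,j) * complex_of_real (ev ! j) * cnj (V $$ (k,j)))"
    and ev0: "\<forall>j<N. 0 \<le> ev ! j" and ev1: "(\<Sum>j<N. ev ! j) = 1"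
    using density_spectral_decomposition[OF assms(3,6)] by blast
  have Y: "unitary_fun N (\<lambda>i j. V $$ (i,j))" by (rule unitary_fun_of_unitary_mat[OF V])
  define xs where "xs = map (\<lambda>i. Re (\<rho> $$ (i,i))) [0..<N] @
    map (\<lambda>i. Re ((mat_adjoint U * \<rho> * U) $$ (i,i))) [0..<N]"
  define W where "W = W_vec N (\<lambda>j. if 1 \<le> j \<and> j \<le> N then ev ! (j - 1) else 0) (s_val N U)"
  note diag = sum_diag_concat[OF Uc rc rep, folded xs_def]
  have "majorized xs W"
  proof (rule majorized_if_subset_sums_le)
    show "length xs = 2 * N" "length W = 2 * N" unfolding xs_def W_def length_W_vec by simp_all
    show "(\<Sum>t\<in>T. xs ! t) \<le> (\<Sum>t<card T. W ! t)" if T: "T \<subseteq> {..<2 * N}" for T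
      using frame_sum_le_S_val[OF T Y assms(5,4) ev0] diag[OF T] sum_W_vec_prefix card_mono[OF _ T]
      unfolding W_def by simp
    have "sum_list xs = (\<Sum>j<N. ev ! j * 2)"
      using diag[of "{..<2 * N}"] sum_frame_coeff_all[OF Uu sq_norm_col_unitary[OF Y]] \<open>length xs = 2 * N\<close>
      by (simp add: sum_list_sum_nth atLeast0LessThan)
    also have "\<dots> = sum_list W"
      using sum_W_vec_prefix[of "2 * N" N] S_val_full ev1 unfolding W_def
      by (simp add: sum_list_sum_nth atLeast0LessThan length_W_vec sum_distrib_right[symmetric])
    finally show "sum_list xs = sum_list W" .
  qed
  then show ?thesis unfolding xs_def W_def .
qed

end
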